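(* Let a qubit stabilizer subsystem code have encoded qubits $\mathcal{H}_e=\bigotimes_{j=1}^{n_L}\mathcal{H}_j$ and encoding isometry $V$, and let $S\subseteq\{1,\dots,n_L\}$ determine the logical subsystem. If $2\le p(S)\le 2d(S)-2$, then every transversal dressed-CSP unitary $U$ satisfies $V^\dagger UV=U_L\otimes U_J$ with $U_L\in\mathcal{C}_2$.
   Context: Stabilizer code: abelian subgroup of the Pauli group not containing $-\mathrm{Id}$, code space its $+1$ eigenspace, encoded space with tensor product structure of encoded qubits and basis such that codespace-preserving physical Paulis implement encoded Paulis; $\Pi=VV^\dagger$. Logical subsystem $\mathcal{H}_L=\bigotimes_{j\in S}\mathcal{H}_j$, junk $\mathcal{H}_J=\bigotimes_{j\notin S}\mathcal{H}_j$. $A$ is CSP if $[A,\Pi]=0$; dressed-CSP if moreover $V^\dagger AV=A_L\otimes A_J$; bare-CSP if also $A_J=\mathrm{Id}_J$. A region $R$ (set of physical qubits) is correctable w.r.t. $S$ if every $A_L\in\mathcal{B}(\mathcal{H}_L)$ is implemented as $A_L\otimes\mathrm{Id}_J$ by a bare-CSP operator supported on $R^c$ (i.e. of the form $A_{R^c}\otimes\mathrm{Id}_R$). Code distance $d(S)=\min\{|R|:R\text{ not correctable w.r.t. }S\}$; code price $p(S)=\min\{|R|:R^c\text{ correctable w.r.t. }S\}$, sizes counted in qubits. Transversal: tensor product of single-qubit unitaries. Clifford hierarchy on $\mathcal{H}_L$: $\mathcal{C}_0=\mathbb{C}\,\mathrm{Id}_L$, $\mathcal{C}_1=\{cP\}$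 with $P$ Pauli on $\mathcal{H}_L$, $\mathcal{C}_k=\{U:\forall P\in\mathcal{C}_1,\ UPU^\dagger P^\dagger\in\mathcal{C}_{k-1}\}$ for $k\ge2$. *)

theory Defs
  imports Complex_Main
begin

text \<open>A configuration of a set Q of qubits is a function nat => bool that is False
outside Q (False = |0>, True = |1>).  An operator from qubits R to qubits Q is a
complex matrix indexed by configurations, vanishing outside cfgs Q x cfgs R.
Vectors on Q are operators from the empty qubit set to Q (a single column).\<close>

type_synonym cfg = "nat \<Rightarrow> bool"
type_synonym qop = "cfg \<Rightarrow> cfg \<Rightarrow> complex"

definition cfgs :: "nat set \<Rightarrow> cfg set" where
  "cfgs Q = {x. \<forall>q. q \<notin> Q \<longrightarrow> \<not> x q}"

definition rst :: "nat set \<Rightarrow> cfg \<Rightarrow> cfg" where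
  "rst Q x = (\<lambda>q. q \<in> Q \<and> x q)"

definition restr :: "nat set \<Rightarrow> nat set \<Rightarrow> qop \<Rightarrow> qop" where
  "restr Q R A = (\<lambda>x y. if x \<in> cfgs Q \<and> y \<in> cfgs R then A x y else 0)"

definition isop :: "nat set \<Rightarrow> nat set \<Rightarrow> qop \<Rightarrow> bool" where
  "isop Q R A \<longleftrightarrow> restr Q R A = A"

definition mmul :: "nat set \<Rightarrow> qop \<Rightarrow> qop \<Rightarrow> qop" where
  "mmul Q A B = (\<lambda>x y. \<Sum>z\<in>cfgs Q. A x z * B z y)"

definition adj :: "qop \<Rightarrow> qop" where
  "adj A = (\<lambda>x y. cnj (A y x))"

definition scal :: "complex \<Rightarrow> qop \<Rightarrow> qop" where
  "scal c A = (\<lambda>x y. c * A x y)"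

definition ident :: "nat set \<Rightarrow> qop" where
  "ident Q = restr Q Q (\<lambda>x y. if x = y then 1 else 0)"

definition tens :: "nat set \<Rightarrow> nat set \<Rightarrow> qop \<Rightarrow> qop \<Rightarrow> qop" where
  "tens Q1 Q2 A B = restr (Q1 \<union> Q2) (Q1 \<union> Q2)
     (\<lambda>x y. A (rst Q1 x) (rst Q1 y) * B (rst Q2 x) (rst Q2 y))"

text \<open>Single-qubit Paulis: 0 = I, 1 = X, 2 = Y, 3 = Z (matrix entry row a, column b).\<close>
definition sigma :: "nat \<Rightarrow> bool \<Rightarrow> bool \<Rightarrow> complex" where
  "sigma k a b =
     (if k = 0 then (if a = b then 1 else 0)
      else if k = 1 then (if a \<noteq> b then 1 else 0)
      else if k = 2 then (if a = b then 0 else if a then \<i> else - \<i>)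
      else (if a = b then (if a then -1 else 1) else 0))"

definition pauli_ops :: "nat set \<Rightarrow> qop set" where
  "pauli_ops Q = {restr Q Q (\<lambda>x y. c * (\<Prod>q\<in>Q. sigma (k q) (x q) (y q))) | c k.
                    c \<in> {1, -1, \<i>, - \<i>} \<and> (\<forall>q. k q < 4)}"

text \<open>Physical qubits {..<n}, encoded qubits {..<nL}.  G is the stabilizer group,
V the encoding isometry from the encoded space onto the code space.\<close>
definition code_proj :: "nat \<Rightarrow> nat \<Rightarrow> qop \<Rightarrow> qop" where
  "code_proj n nL V = mmul {..<nL} V (adj V)"

definition stabilizer_code :: "nat \<Rightarrow> nat \<Rightarrow> qop set \<Rightarrow> qop \<Rightarrow> bool" where
  "stabilizer_code n nL G V \<longleftrightarrow>
     G \<subseteq> pauli_ops {..<n} \<and>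
     ident {..<n} \<in> G \<and>
     (\<forall>g\<in>G. \<forall>h\<in>G. mmul {..<n} g h \<in> G) \<and>
     (\<forall>g\<in>G. \<forall>h\<in>G. mmul {..<n} g h = mmul {..<n} h g) \<and>
     scal (-1) (ident {..<n}) \<notin> G \<and>
     isop {..<n} {..<nL} V \<and>
     mmul {..<n} (adj V) V = ident {..<nL} \<and>
     {\<psi>. isop {..<n} {} \<psi> \<and> (\<forall>g\<in>G. mmul {..<n} g \<psi> = \<psi>)}
       = {mmul {..<nL} V \<phi> | \<phi>. isop {..<nL} {} \<phi>} \<and>
     (\<forall>P\<in>pauli_ops {..<n}.
        mmul {..<n} P (code_proj n nL V) = mmul {..<n} (code_proj n nL V) P \<longrightarrow>
        mmul {..<n} (adj V) (mmul {..<n} P V) \<in> pauli_ops {..<nL})"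

definition CSP :: "nat \<Rightarrow> nat \<Rightarrow> qop \<Rightarrow> qop \<Rightarrow> bool" where
  "CSP n nL V A \<longleftrightarrow> mmul {..<n} A (code_proj n nL V) = mmul {..<n} (code_proj n nL V) A"

definition logical_action :: "nat \<Rightarrow> qop \<Rightarrow> qop \<Rightarrow> qop" where
  "logical_action n V A = mmul {..<n} (adj V) (mmul {..<n} A V)"

definition dressed_CSP :: "nat \<Rightarrow> nat \<Rightarrow> qop \<Rightarrow> nat set \<Rightarrow> qop \<Rightarrow> bool" where
  "dressed_CSP n nL V S A \<longleftrightarrow> CSP n nL V A \<and>
     (\<exists>AL AJ. isop S S AL \<and> isop ({..<nL} - S) ({..<nL} - S) AJ \<and>
        logical_action n V A = tens S ({..<nL} - S) AL AJ)"

definition bare_CSP :: "nat \<Rightarrow> nat \<Rightarrow> qop \<Rightarrow> nat set \<Rightarrow> qop \<Rightarrow> bool" where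
  "bare_CSP n nL V S A \<longleftrightarrow> CSP n nL V A \<and>
     (\<exists>AL. isop S S AL \<and>
        logical_action n V A = tens S ({..<nL} - S) AL (ident ({..<nL} - S)))"

definition correctable :: "nat \<Rightarrow> nat \<Rightarrow> qop \<Rightarrow> nat set \<Rightarrow> nat set \<Rightarrow> bool" where
  "correctable n nL V S R \<longleftrightarrow>
     (\<forall>AL. isop S S AL \<longrightarrow>
        (\<exists>A. isop ({..<n} - R) ({..<n} - R) A \<and>
             (let B = tens ({..<n} - R) R A (ident R) in
                CSP n nL V B \<and>
                logical_action n V B = tens S ({..<nL} - S) AL (ident ({..<nL} - S)))))"

definition code_distance :: "nat \<Rightarrow> nat \<Rightarrow> qop \<Rightarrow> nat set \<Rightarrow> nat" where
  "code_distance n nL V S =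
     Inf {card R | R. R \<subseteq> {..<n} \<and> \<not> correctable n nL V S R}"

definition code_price :: "nat \<Rightarrow> nat \<Rightarrow> qop \<Rightarrow> nat set \<Rightarrow> nat" where
  "code_price n nL V S =
     Inf {card R | R. R \<subseteq> {..<n} \<and> correctable n nL V S ({..<n} - R)}"

definition unitary1 :: "(bool \<Rightarrow> bool \<Rightarrow> complex) \<Rightarrow> bool" where
  "unitary1 u \<longleftrightarrow>
     (\<forall>a c. (\<Sum>b\<in>UNIV. u a b * cnj (u c b)) = (if a = c then 1 else 0)) \<and>
     (\<forall>a c. (\<Sum>b\<in>UNIV. cnj (u b a) * u b c) = (if a = c then 1 else 0))"

definition transversal :: "nat \<Rightarrow> qop \<Rightarrow> bool" where
  "transversal n U \<longleftrightarrow>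
     (\<exists>u. (\<forall>q<n. unitary1 (u q)) \<and>
          U = restr {..<n} {..<n} (\<lambda>x y. \<Prod>q\<in>{..<n}. u q (x q) (y q)))"

fun cliff :: "nat set \<Rightarrow> nat \<Rightarrow> qop set" where
  "cliff S 0 = {scal c (ident S) | c. True}"
| "cliff S (Suc 0) = {scal c P | c P. P \<in> pauli_ops S}"
| "cliff S (Suc (Suc k)) =
     {U. isop S S U \<and>
         (\<forall>P\<in>cliff S 1. mmul S (mmul S (mmul S U P) (adj U)) (adj P) \<in> cliff S (Suc k))}"

end

theory Submission
  imports Defs
begin

text \<open>Take a region \<open>R\<close> of \<open>p(S)\<close> qubits whose complement is correctable and split it into
  parts \<open>R1\<close>, \<open>R2\<close> of \<open>floor (p/2)\<close> and \<open>ceiling (p/2)\<close> qubits; since \<open>p \<le> 2d - 2\<close>, both are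
  smaller than \<open>d(S)\<close> and hence correctable. Clean a logical Pauli \<open>P\<close> off the complement of \<open>R\<close>
  and a logical Pauli \<open>Q\<close> off \<open>R1\<close>. For transversal \<open>U\<close>, the group commutator of \<open>U\<close> with the
  first cleaned Pauli string is supported in \<open>R\<close>, and its commutator with the second one in
  \<open>R - R1 = R2\<close>. A code-preserving operator acting trivially off a correctable region commutes
  with all bare logical operators, so it acts on the logical subsystem as a scalar. Hence
  \<open>[[U_L, P], Q]\<close> is a scalar for all logical Paulis \<open>P\<close>, \<open>Q\<close>, which forces each
  \<open>[U_L, P]\<close> to be a multiple of a Pauli operator, i.e. \<open>U_L \<in> C_2\<close>.\<close>

lemma rst_in_cfgs [simp]: "rst Q x \<in> cfgs Q"
  by (simp add: cfgs_def rst_def)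

lemma rst_cfgs [simp]: "x \<in> cfgs Q \<Longrightarrow> rst Q x = x"
  by (auto simp: cfgs_def rst_def fun_eq_iff)

lemma cfgs_empty: "cfgs {} = {\<lambda>_. False}"
  by (auto simp: cfgs_def)

lemma cfgs_mono: "Q \<subseteq> R \<Longrightarrow> cfgs Q \<subseteq> cfgs R"
  by (auto simp: cfgs_def)

lemma cfgs_eq_iff: "x \<in> cfgs Q \<Longrightarrow> y \<in> cfgs Q \<Longrightarrow> (\<forall>q\<in>Q. x q = y q) \<longleftrightarrow> x = y"
  by (auto simp: cfgs_def fun_eq_iff)

lemma finite_cfgs [simp]:
  assumes "finite Q"
  shows "finite (cfgs Q)"
proof -
  have "cfgs Q \<subseteq> (\<lambda>A q. q \<in> A) ` Pow Q"
  proof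
    fix x assume "x \<in> cfgs Q"
    then have "x = (\<lambda>q. q \<in> {q. x q})" "{q. x q} \<in> Pow Q" by (auto simp: cfgs_def)
    then show "x \<in> (\<lambda>A q. q \<in> A) ` Pow Q" by blast
  qed
  then show ?thesis using assms by (meson finite_Pow_iff finite_imageI finite_subset)
qed

definition zero_cfg :: cfg where
  "zero_cfg = (\<lambda>_. False)"

lemma zero_cfg_in_cfgs [simp]: "zero_cfg \<in> cfgs Q"
  by (simp add: zero_cfg_def cfgs_def)

lemma isopD:
  assumes "isop Q R A" "x \<notin> cfgs Q \<or> y \<notin> cfgs R"
  shows "A x y = 0"
proof -
  have "A x y = restr Q R A x y" using assms(1) by (simp add: isop_def)
  also have "\<dots> = 0" using assms(2) by (auto simp: restr_def)
  finally show ?thesis .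
qed

lemma isopI: "(\<And>x y. x \<notin> cfgs Q \<or> y \<notin> cfgs R \<Longrightarrow> A x y = 0) \<Longrightarrow> isop Q R A"
  unfolding isop_def restr_def fun_eq_iff by simp

lemma isop_eqI:
  assumes "isop Q R A" "isop Q R B" "\<And>x y. x \<in> cfgs Q \<Longrightarrow> y \<in> cfgs R \<Longrightarrow> A x y = B x y"
  shows "A = B"
proof (intro ext)
  fix x y
  show "A x y = B x y"
    using assms by (cases "x \<in> cfgs Q \<and> y \<in> cfgs R") (auto simp: isopD)
qed

lemma isop_restr [simp]: "isop Q R (restr Q R A)"
  by (rule isopI) (auto simp: restr_def)

lemma isop_mmul: "isop Q R A \<Longrightarrow> isop R T B \<Longrightarrow> isop Q T (mmul R A B)"
  by (rule isopI) (auto simp: mmul_def isopD intro!: sum.neutral)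

lemma isop_adj: "isop Q R A \<Longrightarrow> isop R Q (adj A)"
  by (rule isopI) (auto simp: adj_def dest: isopD)

lemma isop_scal: "isop Q R A \<Longrightarrow> isop Q R (scal c A)"
  by (rule isopI) (auto simp: scal_def dest: isopD)

lemma isop_ident [simp]: "isop Q Q (ident Q)"
  by (simp add: ident_def)

lemma ident_apply: "ident Q x y = (if x \<in> cfgs Q \<and> y = x then 1 else 0)"
  by (auto simp: ident_def restr_def)

lemma mmul_assoc: "mmul Q (mmul R A B) C = mmul R A (mmul Q B C)"
proof (intro ext)
  fix x y
  have "mmul Q (mmul R A B) C x y = (\<Sum>z\<in>cfgs Q. \<Sum>w\<in>cfgs R. A x w * B w z * C z y)"
    unfolding mmul_def by (simp add: sum_distrib_right)
  also have "\<dots> = (\<Sum>w\<in>cfgs R. \<Sum>z\<in>cfgs Q. A x w * (B w z * C z y))"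
    by (subst sum.swap) (simp add: mult.assoc)
  also have "\<dots> = mmul R A (mmul Q B C) x y"
    unfolding mmul_def by (simp add: sum_distrib_left)
  finally show "mmul Q (mmul R A B) C x y = mmul R A (mmul Q B C) x y" .
qed

lemma mmul_ident_left:
  assumes "finite Q" "isop Q R A"
  shows "mmul Q (ident Q) A = A"
proof (intro ext)
  fix x y
  show "mmul Q (ident Q) A x y = A x y"
  proof (cases "x \<in> cfgs Q")
    case True
    have "mmul Q (ident Q) A x y = (\<Sum>z\<in>cfgs Q. if z = x then A z y else 0)"
      unfolding mmul_def by (rule sum.cong) (auto simp: ident_apply True)
    also have "\<dots> = A x y" using True assms(1) by (simp add: sum.delta')
    finally show ?thesis .
  next
    case False
    then show ?thesis using assms(2) by (simp add: mmul_def ident_apply isopD)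
  qed
qed

lemma mmul_ident_right:
  assumes "finite R" "isop Q R A"
  shows "mmul R A (ident R) = A"
proof (intro ext)
  fix x y
  show "mmul R A (ident R) x y = A x y"
  proof (cases "y \<in> cfgs R")
    case True
    have "mmul R A (ident R) x y = (\<Sum>z\<in>cfgs R. if z = y then A x z else 0)"
      unfolding mmul_def by (rule sum.cong) (auto simp: ident_apply True)
    also have "\<dots> = A x y" using True assms(1) by (simp add: sum.delta')
    finally show ?thesis .
  next
    case False
    then show ?thesis using assms(2) by (auto simp: mmul_def ident_apply isopD intro!: sum.neutral)
  qed
qed

lemma adj_adj [simp]: "adj (adj A) = A"
  by (simp add: adj_def)

lemma adj_mmul: "adj (mmul Q A B) = mmul Q (adj B) (adj A)"
  by (simp add: adj_def mmul_def fun_eq_iff mult.commute)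

lemma adj_scal: "adj (scal c A) = scal (cnj c) (adj A)"
  by (simp add: adj_def scal_def fun_eq_iff)

lemma adj_ident [simp]: "adj (ident Q) = ident Q"
  by (intro ext) (auto simp: adj_def ident_apply)

lemma mmul_scal_left: "mmul Q (scal c A) B = scal c (mmul Q A B)"
  by (simp add: scal_def mmul_def fun_eq_iff sum_distrib_left mult.assoc)

lemma mmul_scal_right: "mmul Q A (scal c B) = scal c (mmul Q A B)"
  by (simp add: scal_def mmul_def fun_eq_iff sum_distrib_left mult.left_commute)

lemma scal_scal: "scal c (scal d A) = scal (c * d) A"
  by (simp add: scal_def fun_eq_iff)

lemma scal_one [simp]: "scal 1 A = A"
  by (simp add: scal_def)

lemma scal_cancel: "c \<noteq> 0 \<Longrightarrow> scal c A = scal c B \<Longrightarrow> A = B"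
  by (auto simp: scal_def fun_eq_iff)

lemma mmul_scalar_cancel:
  "finite Q \<Longrightarrow> isop Q Q Z \<Longrightarrow> mmul Q X Y = scal a (ident Q) \<Longrightarrow> mmul Q X (mmul Q Y Z) = scal a Z"
  by (simp add: mmul_assoc[symmetric] mmul_scal_left mmul_ident_left)

lemma mmul_ident_cancel:
  "finite Q \<Longrightarrow> isop Q Q Z \<Longrightarrow> mmul Q X Y = ident Q \<Longrightarrow> mmul Q X (mmul Q Y Z) = Z"
  using mmul_scalar_cancel[of Q Z X Y 1] by simp

definition matrix_unit :: "nat set \<Rightarrow> cfg \<Rightarrow> cfg \<Rightarrow> qop" where
  "matrix_unit Q a b = restr Q Q (\<lambda>x y. if x = a \<and> y = b then 1 else 0)"

lemma mmul_matrix_unit_right: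
  "finite Q \<Longrightarrow> a \<in> cfgs Q \<Longrightarrow> b \<in> cfgs Q \<Longrightarrow> y \<in> cfgs Q \<Longrightarrow>
   mmul Q X (matrix_unit Q a b) x y = (if y = b then X x a else 0)"
  unfolding mmul_def matrix_unit_def restr_def
  by (simp add: if_distrib[of "\<lambda>t. X x _ * t"] sum.delta' cong: if_cong)

lemma mmul_matrix_unit_left:
  "finite Q \<Longrightarrow> a \<in> cfgs Q \<Longrightarrow> b \<in> cfgs Q \<Longrightarrow> x \<in> cfgs Q \<Longrightarrow>
   mmul Q (matrix_unit Q a b) X x y = (if x = a then X b y else 0)"
  unfolding mmul_def matrix_unit_def restr_def
  by (simp add: if_distrib[of "\<lambda>t. t * X _ y"] sum.delta cong: if_cong)

lemma commutes_with_all_scalar: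
  assumes "finite Q" "isop Q Q X" and comm: "\<And>A. isop Q Q A \<Longrightarrow> mmul Q X A = mmul Q A X"
  shows "\<exists>c. X = scal c (ident Q)"
proof -
  have "X = scal (X zero_cfg zero_cfg) (ident Q)"
  proof (rule isop_eqI[OF assms(2) isop_scal[OF isop_ident]])
    fix x a assume xa: "x \<in> cfgs Q" "a \<in> cfgs Q"
    have "mmul Q X (matrix_unit Q a zero_cfg) x zero_cfg = mmul Q (matrix_unit Q a zero_cfg) X x zero_cfg"
      using comm[of "matrix_unit Q a zero_cfg"] by (simp add: matrix_unit_def)
    then show "X x a = scal (X zero_cfg zero_cfg) (ident Q) x a"
      using xa assms(1) by (simp add: mmul_matrix_unit_left mmul_matrix_unit_right scal_def ident_apply)
  qed
  then show ?thesis by blast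
qed

definition basis_vector :: "nat set \<Rightarrow> cfg \<Rightarrow> qop" where
  "basis_vector Q y = restr Q {} (\<lambda>x z. if x = y then 1 else 0)"

lemma isop_basis_vector [simp]: "isop Q {} (basis_vector Q y)"
  by (simp add: basis_vector_def)

lemma mmul_basis_vector:
  "finite Q \<Longrightarrow> y \<in> cfgs Q \<Longrightarrow> mmul Q A (basis_vector Q y) x zero_cfg = A x y"
  unfolding mmul_def basis_vector_def restr_def
  by (simp add: if_distrib[of "\<lambda>t. A x _ * t"] sum.delta' cfgs_empty zero_cfg_def cong: if_cong)

lemma eq_if_mmul_basis_vector_eq:
  assumes "finite R" "isop Q R A" "isop Q R B"
    and "\<And>y. y \<in> cfgs R \<Longrightarrow> mmul R A (basis_vector R y) = mmul R B (basis_vector R y)"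
  shows "A = B"
proof (rule isop_eqI[OF assms(2,3)])
  fix x y assume "y \<in> cfgs R"
  then show "A x y = B x y"
    using assms(4)[of y] mmul_basis_vector[OF assms(1), of y A x] mmul_basis_vector[OF assms(1), of y B x]
    by simp
qed

section \<open>Tensor products\<close>

definition merge :: "cfg \<Rightarrow> cfg \<Rightarrow> cfg" where
  "merge a b = (\<lambda>q. a q \<or> b q)"

lemma rst_merge1: "a \<in> cfgs Q1 \<Longrightarrow> b \<in> cfgs Q2 \<Longrightarrow> Q1 \<inter> Q2 = {} \<Longrightarrow> rst Q1 (merge a b) = a"
  by (auto simp: rst_def merge_def cfgs_def fun_eq_iff)

lemma rst_merge2: "a \<in> cfgs Q1 \<Longrightarrow> b \<in> cfgs Q2 \<Longrightarrow> Q1 \<inter> Q2 = {} \<Longrightarrow> rst Q2 (merge a b) = b"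
  by (auto simp: rst_def merge_def cfgs_def fun_eq_iff)

lemma merge_in_cfgs: "a \<in> cfgs Q1 \<Longrightarrow> b \<in> cfgs Q2 \<Longrightarrow> merge a b \<in> cfgs (Q1 \<union> Q2)"
  by (auto simp: merge_def cfgs_def)

lemma merge_rst: "x \<in> cfgs (Q1 \<union> Q2) \<Longrightarrow> merge (rst Q1 x) (rst Q2 x) = x"
  by (auto simp: merge_def cfgs_def rst_def fun_eq_iff)

lemma sum_cfgs_Un:
  assumes "finite Q1" "finite Q2" "Q1 \<inter> Q2 = {}"
  shows "(\<Sum>z\<in>cfgs (Q1 \<union> Q2). f z) = (\<Sum>a\<in>cfgs Q1. \<Sum>b\<in>cfgs Q2. f (merge a b))"
proof -
  let ?m = "\<lambda>p. merge (fst p) (snd p)"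
  have bij: "bij_betw ?m (cfgs Q1 \<times> cfgs Q2) (cfgs (Q1 \<union> Q2))"
  proof (rule bij_betw_byWitness[where f' = "\<lambda>x. (rst Q1 x, rst Q2 x)"])
    show "\<forall>p\<in>cfgs Q1 \<times> cfgs Q2. (rst Q1 (?m p), rst Q2 (?m p)) = p"
      using rst_merge1[OF _ _ assms(3)] rst_merge2[OF _ _ assms(3)] by auto
  qed (use merge_rst merge_in_cfgs in auto)
  have "(\<Sum>z\<in>cfgs (Q1 \<union> Q2). f z) = (\<Sum>p\<in>cfgs Q1 \<times> cfgs Q2. f (?m p))"
    using sum.reindex_bij_betw[OF bij, of f] by simp
  also have "\<dots> = (\<Sum>a\<in>cfgs Q1. \<Sum>b\<in>cfgs Q2. f (merge a b))"
    by (simp add: sum.cartesian_product case_prod_beta)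
  finally show ?thesis .
qed

lemma tens_apply:
  "tens Q1 Q2 A B x y = (if x \<in> cfgs (Q1 \<union> Q2) \<and> y \<in> cfgs (Q1 \<union> Q2)
     then A (rst Q1 x) (rst Q1 y) * B (rst Q2 x) (rst Q2 y) else 0)"
  by (simp add: tens_def restr_def)

lemma tens_merge_apply:
  assumes "x \<in> cfgs Q1" "y \<in> cfgs Q1" "u \<in> cfgs Q2" "v \<in> cfgs Q2" "Q1 \<inter> Q2 = {}"
  shows "tens Q1 Q2 A B (merge x u) (merge y v) = A x y * B u v"
  using assms by (simp add: tens_apply merge_in_cfgs rst_merge1 rst_merge2)

lemma isop_tens [simp]: "isop (Q1 \<union> Q2) (Q1 \<union> Q2) (tens Q1 Q2 A B)"
  by (simp add: tens_def)

lemma tens_mmul: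
  assumes "finite Q1" "finite Q2" "Q1 \<inter> Q2 = {}"
  shows "mmul (Q1 \<union> Q2) (tens Q1 Q2 A B) (tens Q1 Q2 C D) = tens Q1 Q2 (mmul Q1 A C) (mmul Q2 B D)"
proof (intro ext)
  fix x y
  show "mmul (Q1 \<union> Q2) (tens Q1 Q2 A B) (tens Q1 Q2 C D) x y = tens Q1 Q2 (mmul Q1 A C) (mmul Q2 B D) x y"
  proof (cases "x \<in> cfgs (Q1 \<union> Q2) \<and> y \<in> cfgs (Q1 \<union> Q2)")
    case True
    have "mmul (Q1 \<union> Q2) (tens Q1 Q2 A B) (tens Q1 Q2 C D) x y =
       (\<Sum>z\<in>cfgs (Q1 \<union> Q2). A (rst Q1 x) (rst Q1 z) * B (rst Q2 x) (rst Q2 z) *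
          (C (rst Q1 z) (rst Q1 y) * D (rst Q2 z) (rst Q2 y)))"
      unfolding mmul_def by (rule sum.cong) (auto simp: tens_apply True)
    also have "\<dots> = (\<Sum>a\<in>cfgs Q1. \<Sum>b\<in>cfgs Q2.
        A (rst Q1 x) a * B (rst Q2 x) b * (C a (rst Q1 y) * D b (rst Q2 y)))"
      by (subst sum_cfgs_Un[OF assms]) (intro sum.cong refl, simp add: rst_merge1 rst_merge2 assms)
    also have "\<dots> = (\<Sum>a\<in>cfgs Q1. A (rst Q1 x) a * C a (rst Q1 y)) *
        (\<Sum>b\<in>cfgs Q2. B (rst Q2 x) b * D b (rst Q2 y))"
      by (simp add: sum_product algebra_simps)
    finally show ?thesis using True by (simp add: tens_apply mmul_def)
  qed (auto simp: tens_apply mmul_def)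
qed

lemma tens_adj: "adj (tens Q1 Q2 A B) = tens Q1 Q2 (adj A) (adj B)"
  by (intro ext) (auto simp: tens_apply adj_def)

lemma tens_scal_left: "tens Q1 Q2 (scal c A) B = scal c (tens Q1 Q2 A B)"
  by (intro ext) (auto simp: tens_apply scal_def)

lemma tens_scal_right: "tens Q1 Q2 A (scal c B) = scal c (tens Q1 Q2 A B)"
  by (intro ext) (auto simp: tens_apply scal_def)

lemma tens_eq_ident_scalar:
  assumes "finite Q1" "finite Q2" "Q1 \<inter> Q2 = {}" "isop Q1 Q1 A" "isop Q2 Q2 B"
    and "tens Q1 Q2 A B = ident (Q1 \<union> Q2)"
  shows "\<exists>\<mu>. \<mu> \<noteq> 0 \<and> A = scal \<mu> (ident Q1) \<and> B = scal (1 / \<mu>) (ident Q2)"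
proof -
  have key: "A x y * B u v = (if x = y \<and> u = v then 1 else 0)"
    if "x \<in> cfgs Q1" "y \<in> cfgs Q1" "u \<in> cfgs Q2" "v \<in> cfgs Q2" for x y u v
  proof -
    have "A x y * B u v = ident (Q1 \<union> Q2) (merge x u) (merge y v)"
      using tens_merge_apply[OF that assms(3), of A B] assms(6) by simp
    moreover have "merge x u = merge y v \<longleftrightarrow> x = y \<and> u = v"
      using that by (metis assms(3) rst_merge1 rst_merge2)
    ultimately show ?thesis using that by (auto simp: ident_apply merge_in_cfgs)
  qed
  define \<mu> where "\<mu> = A zero_cfg zero_cfg"
  have \<mu>B: "\<mu> * B zero_cfg zero_cfg = 1"
    using key[of zero_cfg zero_cfg zero_cfg zero_cfg] by (simp add: \<mu>_def)
  then have "\<mu> \<noteq> 0"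
    by auto
  have "A = scal \<mu> (ident Q1)"
  proof (rule isop_eqI[OF assms(4) isop_scal[OF isop_ident]])
    fix x y assume xy: "x \<in> cfgs Q1" "y \<in> cfgs Q1"
    have "A x y = (A x y * B zero_cfg zero_cfg) * \<mu>"
      using \<mu>B by (simp add: ac_simps)
    also have "\<dots> = (if x = y then 1 else 0) * \<mu>"
      using key[OF xy zero_cfg_in_cfgs zero_cfg_in_cfgs] by simp
    finally show "A x y = scal \<mu> (ident Q1) x y"
      using xy by (simp add: scal_def ident_apply)
  qed
  moreover have "B = scal (1 / \<mu>) (ident Q2)"
  proof (rule isop_eqI[OF assms(5) isop_scal[OF isop_ident]])
    fix u v assume uv: "u \<in> cfgs Q2" "v \<in> cfgs Q2"
    have "B u v = (\<mu> * B u v) / \<mu>"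
      using \<open>\<mu> \<noteq> 0\<close> by simp
    also have "\<dots> = (if u = v then 1 else 0) / \<mu>"
      using key[OF zero_cfg_in_cfgs zero_cfg_in_cfgs uv] by (simp add: \<mu>_def)
    finally show "B u v = scal (1 / \<mu>) (ident Q2) u v"
      using uv by (simp add: scal_def ident_apply)
  qed
  ultimately show ?thesis
    using \<open>\<mu> \<noteq> 0\<close> by blast
qed

lemma tens_ident_right_inj:
  assumes "Q1 \<inter> Q2 = {}" "isop Q1 Q1 A" "isop Q1 Q1 B"
    and "tens Q1 Q2 A (ident Q2) = tens Q1 Q2 B (ident Q2)"
  shows "A = B"
proof (rule isop_eqI[OF assms(2,3)])
  fix x y assume xy: "x \<in> cfgs Q1" "y \<in> cfgs Q1"
  have "tens Q1 Q2 A (ident Q2) (merge x zero_cfg) (merge y zero_cfg) =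
      tens Q1 Q2 B (ident Q2) (merge x zero_cfg) (merge y zero_cfg)"
    using assms(4) by simp
  then show "A x y = B x y"
    using xy assms(1) by (simp add: tens_merge_apply ident_apply)
qed

section \<open>Product operators\<close>

type_synonym mat1 = "bool \<Rightarrow> bool \<Rightarrow> complex"

definition prodop :: "nat set \<Rightarrow> (nat \<Rightarrow> mat1) \<Rightarrow> qop" where
  "prodop Q f = restr Q Q (\<lambda>x y. \<Prod>q\<in>Q. f q (x q) (y q))"

definition mmul1 :: "mat1 \<Rightarrow> mat1 \<Rightarrow> mat1" where
  "mmul1 f g a b = f a True * g True b + f a False * g False b"

definition adj1 :: "mat1 \<Rightarrow> mat1" where
  "adj1 f a b = cnj (f b a)"

definition ident1 :: mat1 where
  "ident1 a b = (if a = b then 1 else 0)"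

lemma mmul1_assoc: "mmul1 (mmul1 f g) h = mmul1 f (mmul1 g h)"
  by (simp add: mmul1_def fun_eq_iff algebra_simps)

lemma mmul1_ident1_left [simp]: "mmul1 ident1 f = f"
  by (simp add: mmul1_def ident1_def fun_eq_iff)

lemma mmul1_ident1_right [simp]: "mmul1 f ident1 = f"
  by (simp add: mmul1_def ident1_def fun_eq_iff)

lemma adj1_mmul1: "adj1 (mmul1 f g) = mmul1 (adj1 g) (adj1 f)"
  by (simp add: mmul1_def adj1_def fun_eq_iff mult.commute)

lemma adj1_adj1 [simp]: "adj1 (adj1 f) = f"
  by (simp add: adj1_def fun_eq_iff)

lemma adj1_ident1 [simp]: "adj1 ident1 = ident1"
  by (simp add: adj1_def ident1_def fun_eq_iff)

lemma unitary1_iff: "unitary1 u \<longleftrightarrow> mmul1 u (adj1 u) = ident1 \<and> mmul1 (adj1 u) u = ident1"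
  unfolding unitary1_def
  by (auto simp: fun_eq_iff mmul1_def adj1_def ident1_def UNIV_bool add.commute)

lemma unitary1_mmul1: "unitary1 a \<Longrightarrow> unitary1 b \<Longrightarrow> unitary1 (mmul1 a b)"
  unfolding unitary1_iff adj1_mmul1 by (metis mmul1_assoc mmul1_ident1_left)

lemma unitary1_adj1: "unitary1 a \<Longrightarrow> unitary1 (adj1 a)"
  unfolding unitary1_iff by simp

lemma isop_prodop [simp]: "isop Q Q (prodop Q f)"
  by (simp add: prodop_def)

lemma prodop_apply:
  "prodop Q f x y = (if x \<in> cfgs Q \<and> y \<in> cfgs Q then \<Prod>q\<in>Q. f q (x q) (y q) else 0)"
  by (simp add: prodop_def restr_def)

lemma prodop_cong: "(\<And>q. q \<in> Q \<Longrightarrow> f q = g q) \<Longrightarrow> prodop Q f = prodop Q g"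
  unfolding prodop_def by (simp cong: prod.cong)

lemma prod_if_zero:
  "finite Q \<Longrightarrow> (\<Prod>q\<in>Q. if P q then c q else (0::complex)) = (if \<forall>q\<in>Q. P q then \<Prod>q\<in>Q. c q else 0)"
  by (induction Q rule: finite_induct) auto

lemma sum_cfgs_prod:
  fixes h :: "nat \<Rightarrow> bool \<Rightarrow> complex"
  assumes "finite Q"
  shows "(\<Sum>x\<in>cfgs Q. \<Prod>q\<in>Q. h q (x q)) = (\<Prod>q\<in>Q. h q True + h q False)"
  using assms
proof (induction Q rule: finite_induct)
  case empty
  then show ?case by (simp add: cfgs_empty)
next
  case (insert a Q)
  have "(\<Sum>x\<in>cfgs ({a} \<union> Q). \<Prod>q\<in>insert a Q. h q (x q)) =
      (\<Sum>c\<in>cfgs {a}. \<Sum>b\<in>cfgs Q. \<Prod>q\<in>insert a Q. h q (merge c b q))"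
    by (rule sum_cfgs_Un) (use insert in auto)
  also have "\<dots> = (\<Sum>c\<in>cfgs {a}. \<Sum>b\<in>cfgs Q. h a (c a) * (\<Prod>q\<in>Q. h q (b q)))"
  proof (intro sum.cong refl)
    fix c b assume c: "c \<in> cfgs {a}" and b: "b \<in> cfgs Q"
    have "(\<Prod>q\<in>Q. h q (merge c b q)) = (\<Prod>q\<in>Q. h q (b q))"
      using c insert(2) by (intro prod.cong refl) (auto simp: merge_def cfgs_def)
    moreover have "merge c b a = c a"
      using b insert(2) by (auto simp: merge_def cfgs_def)
    ultimately show "(\<Prod>q\<in>insert a Q. h q (merge c b q)) = h a (c a) * (\<Prod>q\<in>Q. h q (b q))"
      using insert by simp
  qed
  also have "\<dots> = (\<Sum>c\<in>cfgs {a}. h a (c a)) * (\<Sum>b\<in>cfgs Q. \<Prod>q\<in>Q. h q (b q))"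
    by (rule sum_product[symmetric])
  also have "(\<Sum>c\<in>cfgs {a}. h a (c a)) = h a True + h a False"
  proof -
    have "cfgs {a} = {\<lambda>_. False, (\<lambda>_. False)(a := True)}"
      by (auto simp: cfgs_def fun_eq_iff)
    moreover have "(\<lambda>_. False) \<noteq> (\<lambda>_::nat. False)(a := True)"
      by (auto simp: fun_eq_iff)
    ultimately show ?thesis by (simp add: add.commute)
  qed
  finally show ?case using insert by simp
qed

lemma prodop_mmul:
  assumes "finite Q"
  shows "mmul Q (prodop Q f) (prodop Q g) = prodop Q (\<lambda>q. mmul1 (f q) (g q))"
proof (intro ext)
  fix x y
  show "mmul Q (prodop Q f) (prodop Q g) x y = prodop Q (\<lambda>q. mmul1 (f q) (g q)) x y"
  proof (cases "x \<in> cfgs Q \<and> y \<in> cfgs Q")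
    case True
    have "mmul Q (prodop Q f) (prodop Q g) x y =
        (\<Sum>z\<in>cfgs Q. \<Prod>q\<in>Q. f q (x q) (z q) * g q (z q) (y q))"
      unfolding mmul_def by (rule sum.cong) (auto simp: prodop_apply True prod.distrib)
    also have "\<dots> = (\<Prod>q\<in>Q. mmul1 (f q) (g q) (x q) (y q))"
      by (subst sum_cfgs_prod[OF assms]) (simp add: mmul1_def)
    finally show ?thesis using True by (simp add: prodop_apply)
  qed (auto simp: prodop_apply mmul_def)
qed

lemma adj_prodop: "adj (prodop Q f) = prodop Q (\<lambda>q. adj1 (f q))"
  by (intro ext) (auto simp: prodop_apply adj_def adj1_def)

lemma prodop_eq_ident:
  assumes "finite Q" "\<And>q. q \<in> Q \<Longrightarrow> f q = ident1"
  shows "prodop Q f = ident Q"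
proof (intro ext)
  fix x y
  show "prodop Q f x y = ident Q x y"
  proof (cases "x \<in> cfgs Q \<and> y \<in> cfgs Q")
    case True
    then have "(\<Prod>q\<in>Q. f q (x q) (y q)) = (if \<forall>q\<in>Q. x q = y q then 1 else 0)"
      using assms by (simp add: ident1_def prod_if_zero cong: prod.cong)
    then show ?thesis using True by (simp add: prodop_apply ident_apply cfgs_eq_iff eq_commute)
  qed (auto simp: prodop_apply ident_apply)
qed

lemma prodop_Un:
  assumes "finite Q1" "finite Q2" "Q1 \<inter> Q2 = {}"
  shows "prodop (Q1 \<union> Q2) f = tens Q1 Q2 (prodop Q1 f) (prodop Q2 f)"
proof (intro ext)
  fix x y
  show "prodop (Q1 \<union> Q2) f x y = tens Q1 Q2 (prodop Q1 f) (prodop Q2 f) x y"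
  proof (cases "x \<in> cfgs (Q1 \<union> Q2) \<and> y \<in> cfgs (Q1 \<union> Q2)")
    case True
    have "(\<Prod>q\<in>Q1 \<union> Q2. f q (x q) (y q)) = (\<Prod>q\<in>Q1. f q (x q) (y q)) * (\<Prod>q\<in>Q2. f q (x q) (y q))"
      using assms by (simp add: prod.union_disjoint)
    also have "(\<Prod>q\<in>Q1. f q (x q) (y q)) = (\<Prod>q\<in>Q1. f q (rst Q1 x q) (rst Q1 y q))"
      by (rule prod.cong) (auto simp: rst_def)
    also have "(\<Prod>q\<in>Q2. f q (x q) (y q)) = (\<Prod>q\<in>Q2. f q (rst Q2 x q) (rst Q2 y q))"
      by (rule prod.cong) (auto simp: rst_def)
    finally show ?thesis using True by (simp add: prodop_apply tens_apply)
  qed (auto simp: prodop_apply tens_apply)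
qed

lemma prodop_scalar_factors:
  "prodop Q (\<lambda>q a b. e q * f q a b) = scal (\<Prod>q\<in>Q. e q) (prodop Q f)"
  by (intro ext) (simp add: prodop_apply scal_def prod.distrib)

lemma prodop_unitary:
  assumes "finite Q" "\<And>q. q \<in> Q \<Longrightarrow> unitary1 (u q)"
  shows "mmul Q (adj (prodop Q u)) (prodop Q u) = ident Q" "mmul Q (prodop Q u) (adj (prodop Q u)) = ident Q"
  using assms by (auto simp: adj_prodop prodop_mmul unitary1_iff intro!: prodop_eq_ident)

definition trace :: "nat set \<Rightarrow> qop \<Rightarrow> complex" where
  "trace Q A = (\<Sum>x\<in>cfgs Q. A x x)"

lemma trace_prodop:
  assumes "finite Q"
  shows "trace Q (prodop Q f) = (\<Prod>q\<in>Q. f q True True + f q False False)"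
proof -
  have "trace Q (prodop Q f) = (\<Sum>x\<in>cfgs Q. \<Prod>q\<in>Q. f q (x q) (x q))"
    unfolding trace_def by (rule sum.cong) (auto simp: prodop_apply)
  also have "\<dots> = (\<Prod>q\<in>Q. f q True True + f q False False)"
    by (rule sum_cfgs_prod[OF assms])
  finally show ?thesis .
qed

lemma trace_scal: "trace Q (scal c A) = c * trace Q A"
  by (simp add: trace_def scal_def sum_distrib_left)

lemma trace_ident_nonzero: "finite Q \<Longrightarrow> trace Q (ident Q) \<noteq> 0"
  by (simp add: trace_def ident_apply card_eq_0_iff) (use zero_cfg_in_cfgs in blast)

section \<open>Group commutators\<close>

definition commutator :: "nat set \<Rightarrow> qop \<Rightarrow> qop \<Rightarrow> qop" where
  "commutator Q A B = mmul Q (mmul Q (mmul Q A B) (adj A)) (adj B)"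

definition commutator1 :: "mat1 \<Rightarrow> mat1 \<Rightarrow> mat1" where
  "commutator1 a b = mmul1 (mmul1 (mmul1 a b) (adj1 a)) (adj1 b)"

lemma cliff_2_eq: "cliff S 2 = {U. isop S S U \<and> (\<forall>P\<in>cliff S 1. commutator S U P \<in> cliff S 1)}"
  by (simp add: numeral_2_eq_2 commutator_def)

lemma adj_commutator: "adj (commutator Q A B) = commutator Q B A"
  by (simp add: commutator_def adj_mmul mmul_assoc)

lemma commutes_up_to_phase_if_commutator_scalar:
  assumes fin: "finite Q" and iso: "isop Q Q M" "isop Q Q A"
    and M: "mmul Q (adj M) M = scal \<kappa> (ident Q)" "\<kappa> \<noteq> 0"
    and A: "mmul Q (adj A) A = ident Q"
    and comm: "commutator Q M A = scal c (ident Q)"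
  shows "mmul Q M A = scal (c / \<kappa>) (mmul Q A M)"
proof -
  have "mmul Q (mmul Q M A) (adj M) = mmul Q (commutator Q M A) A"
    using A by (simp add: commutator_def mmul_assoc mmul_ident_right[OF fin isop_adj[OF iso(1)]])
  also have "\<dots> = scal c A"
    using comm by (simp add: mmul_scal_left mmul_ident_left[OF fin iso(2)])
  finally have "mmul Q (mmul Q (mmul Q M A) (adj M)) M = scal c (mmul Q A M)"
    by (simp add: mmul_scal_left)
  then have "scal \<kappa> (mmul Q M A) = scal c (mmul Q A M)"
    by (simp add: mmul_assoc M(1) mmul_scal_right mmul_ident_right[OF fin iso(2)])
  then have "scal (1 / \<kappa>) (scal \<kappa> (mmul Q M A)) = scal (1 / \<kappa>) (scal c (mmul Q A M))"
    by simp
  then show ?thesis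
    using M(2) by (simp add: scal_scal)
qed

lemma isop_commutator: "isop Q Q A \<Longrightarrow> isop Q Q B \<Longrightarrow> isop Q Q (commutator Q A B)"
  unfolding commutator_def by (intro isop_mmul isop_adj)

lemma commutator_ident_right:
  assumes "finite Q" "isop Q Q A"
  shows "commutator Q A (ident Q) = mmul Q A (adj A)"
  using mmul_ident_right[OF assms] mmul_ident_right[OF assms(1) isop_mmul[OF assms(2) isop_adj[OF assms(2)]]]
  by (simp add: commutator_def)

lemma commutator_commutator_ident_scalar:
  assumes "finite Q" "isop Q Q Z" "mmul Q Z (adj Z) = scal c (ident Q)"
  shows "commutator Q (commutator Q Z (ident Q)) (ident Q) = scal (c * cnj c) (ident Q)"
  using assms
  by (simp add: commutator_ident_right isop_scal adj_scal mmul_scal_left mmul_scal_right scal_scal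
      mmul_ident_left[OF assms(1) isop_ident] mult.commute)

lemma unitary1_commutator1: "unitary1 a \<Longrightarrow> unitary1 b \<Longrightarrow> unitary1 (commutator1 a b)"
  unfolding commutator1_def by (intro unitary1_mmul1 unitary1_adj1)

lemma commutator1_ident1_right: "unitary1 a \<Longrightarrow> commutator1 a ident1 = ident1"
  unfolding commutator1_def unitary1_iff by simp

lemma commutator1_ident1_left: "unitary1 b \<Longrightarrow> commutator1 ident1 b = ident1"
  unfolding commutator1_def unitary1_iff by simp

lemma commutator1_commutator1_ident1:
  assumes "unitary1 u" "unitary1 s" "unitary1 t" "s = ident1 \<or> t = ident1"
  shows "commutator1 (commutator1 u s) t = ident1"
  using assms by (auto simp: commutator1_ident1_left commutator1_ident1_right unitary1_commutator1)

lemma commutator_prodop: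
  "finite Q \<Longrightarrow> commutator Q (prodop Q f) (prodop Q g) = prodop Q (\<lambda>q. commutator1 (f q) (g q))"
  by (simp add: commutator_def commutator1_def adj_prodop prodop_mmul)

lemma commutator_tens:
  assumes "finite Q1" "finite Q2" "Q1 \<inter> Q2 = {}"
  shows "commutator (Q1 \<union> Q2) (tens Q1 Q2 A B) (tens Q1 Q2 C D) =
    tens Q1 Q2 (commutator Q1 A C) (commutator Q2 B D)"
  by (simp add: commutator_def tens_adj tens_mmul[OF assms])

lemma commutator_scal_left: "commutator Q (scal c A) B = scal (c * cnj c) (commutator Q A B)"
  by (simp add: commutator_def adj_scal mmul_scal_left mmul_scal_right scal_scal mult.commute[of "cnj c"])

lemma commutator_scal_right: "commutator Q A (scal c B) = scal (c * cnj c) (commutator Q A B)"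
  by (simp add: commutator_def adj_scal mmul_scal_left mmul_scal_right scal_scal mult.commute[of "cnj c"])

section \<open>Pauli operators\<close>

lemma sigma_cases: "sigma k = sigma 0 \<or> sigma k = sigma 1 \<or> sigma k = sigma 2 \<or> sigma k = sigma 3"
  by (auto simp: sigma_def fun_eq_iff)

lemma sigma_0: "sigma 0 = ident1"
  by (simp add: sigma_def ident1_def fun_eq_iff)

lemma adj1_sigma [simp]: "adj1 (sigma k) = sigma k"
proof -
  have "adj1 (sigma k) = sigma k" if "k \<in> {0, 1, 2, 3}" for k
    using that by (auto simp: sigma_def adj1_def fun_eq_iff)
  then show ?thesis by (metis insertCI sigma_cases)
qed

lemma mmul1_sigma_sigma [simp]: "mmul1 (sigma k) (sigma k) = ident1"
proof -
  have "mmul1 (sigma k) (sigma k) = ident1" if "k \<in> {0, 1, 2, 3}" for k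
    using that by (auto simp: sigma_def mmul1_def ident1_def fun_eq_iff)
  then show ?thesis by (metis insertCI sigma_cases)
qed

lemma unitary1_sigma [simp]: "unitary1 (sigma k)"
  by (simp add: unitary1_iff)

lemma sigma_commute_or_anticommute:
  "mmul1 (sigma i) (sigma j) = mmul1 (sigma j) (sigma i) \<or>
   mmul1 (sigma i) (sigma j) = (\<lambda>a b. - mmul1 (sigma j) (sigma i) a b)"
proof -
  have "mmul1 (sigma i) (sigma j) = mmul1 (sigma j) (sigma i) \<or>
      mmul1 (sigma i) (sigma j) = (\<lambda>a b. - mmul1 (sigma j) (sigma i) a b)"
    if "i \<in> {0, 1, 2, 3}" "j \<in> {0, 1, 2, 3}" for i j
    using that by (auto simp: sigma_def mmul1_def fun_eq_iff)
  moreover obtain i' where "i' \<in> {0, 1, 2, 3}" "sigma i = sigma i'"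
    using sigma_cases[of i] by blast
  moreover obtain j' where "j' \<in> {0, 1, 2, 3}" "sigma j = sigma j'"
    using sigma_cases[of j] by blast
  ultimately show ?thesis by simp
qed

lemma sigma_trace:
  assumes "i < 4" "j < 4"
  shows "mmul1 (sigma i) (sigma j) True True + mmul1 (sigma i) (sigma j) False False =
    (if i = j then 2 else 0)"
proof -
  have "i \<in> {0, 1, 2, 3}" "j \<in> {0, 1, 2, 3}"
    using assms by auto
  then show ?thesis by (auto simp: sigma_def mmul1_def)
qed

lemma pauli_opsI:
  "c \<in> {1, -1, \<i>, - \<i>} \<Longrightarrow> (\<forall>q. k q < 4) \<Longrightarrow> scal c (prodop Q (\<lambda>q. sigma (k q))) \<in> pauli_ops Q"
  unfolding pauli_ops_def prodop_def restr_def scal_def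
  by (auto simp: fun_eq_iff intro!: exI[of _ c] exI[of _ k])

lemma pauli_opsE:
  assumes "P \<in> pauli_ops Q"
  obtains c k where "c \<in> {1, -1, \<i>, - \<i>}" "\<forall>q. k q < 4" "P = scal c (prodop Q (\<lambda>q. sigma (k q)))"
proof -
  from assms obtain c k where "c \<in> {1, -1, \<i>, - \<i>}" "\<forall>q. k q < 4"
    and "P = restr Q Q (\<lambda>x y. c * (\<Prod>q\<in>Q. sigma (k q) (x q) (y q)))"
    unfolding pauli_ops_def by blast
  moreover have "restr Q Q (\<lambda>x y. c * (\<Prod>q\<in>Q. sigma (k q) (x q) (y q))) =
      scal c (prodop Q (\<lambda>q. sigma (k q)))"
    by (intro ext) (simp add: restr_def scal_def prodop_def)
  ultimately show thesis using that by simp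
qed

lemma isop_pauli: "P \<in> pauli_ops Q \<Longrightarrow> isop Q Q P"
  by (auto elim!: pauli_opsE intro: isop_scal)

lemma pauli_string_square:
  "finite Q \<Longrightarrow> mmul Q (prodop Q (\<lambda>q. sigma (k q))) (prodop Q (\<lambda>q. sigma (k q))) = ident Q"
  by (simp add: prodop_mmul prodop_eq_ident)

lemma pauli_unitary:
  assumes "finite Q" "P \<in> pauli_ops Q"
  shows "mmul Q (adj P) P = ident Q" "mmul Q P (adj P) = ident Q"
proof -
  obtain c k where c: "c \<in> {1, -1, \<i>, - \<i>}" and P: "P = scal c (prodop Q (\<lambda>q. sigma (k q)))"
    using assms(2) by (auto elim!: pauli_opsE)
  have "cnj c * c = 1" "c * cnj c = 1"
    using c by auto
  then show "mmul Q (adj P) P = ident Q" "mmul Q P (adj P) = ident Q"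
    by (simp_all add: P adj_scal adj_prodop mmul_scal_left mmul_scal_right scal_scal
        pauli_string_square[OF assms(1)])
qed

lemma pauli_ops_tens_ident:
  assumes "finite Q1" "finite Q2" "Q1 \<inter> Q2 = {}" "P \<in> pauli_ops Q1"
  shows "tens Q1 Q2 P (ident Q2) \<in> pauli_ops (Q1 \<union> Q2)"
proof -
  obtain c k where c: "c \<in> {1, -1, \<i>, - \<i>}" "\<forall>q. k q < 4"
    and P: "P = scal c (prodop Q1 (\<lambda>q. sigma (k q)))"
    using assms(4) by (auto elim!: pauli_opsE)
  define k' where "k' q = (if q \<in> Q1 then k q else 0)" for q
  have "prodop Q1 (\<lambda>q. sigma (k q)) = prodop Q1 (\<lambda>q. sigma (k' q))"
    by (rule prodop_cong) (simp add: k'_def)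
  moreover have "ident Q2 = prodop Q2 (\<lambda>q. sigma (k' q))"
    using assms(3) by (intro prodop_eq_ident[symmetric] assms(2)) (auto simp: k'_def sigma_0)
  ultimately have "tens Q1 Q2 P (ident Q2) = scal c (prodop (Q1 \<union> Q2) (\<lambda>q. sigma (k' q)))"
    by (simp add: P tens_scal_left prodop_Un[OF assms(1-3)])
  moreover have "\<forall>q. k' q < 4"
    using c(2) by (simp add: k'_def)
  ultimately show ?thesis
    using pauli_opsI[OF c(1)] by simp
qed

lemma pauli_commute_or_anticommute:
  assumes "finite Q"
  shows "\<exists>e. (e = 1 \<or> e = -1) \<and> mmul Q (prodop Q (\<lambda>q. sigma (k q))) (prodop Q (\<lambda>q. sigma (m q))) =
      scal e (mmul Q (prodop Q (\<lambda>q. sigma (m q))) (prodop Q (\<lambda>q. sigma (k q))))"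
proof -
  have "\<exists>e. (e = 1 \<or> e = (-1::complex)) \<and>
      mmul1 (sigma (k q)) (sigma (m q)) = (\<lambda>a b. e * mmul1 (sigma (m q)) (sigma (k q)) a b)" for q
    using sigma_commute_or_anticommute[of "k q" "m q"]
    by (elim disjE) (auto intro: exI[of _ 1] exI[of _ "-1"])
  then obtain e where e: "\<And>q. e q = 1 \<or> e q = -1"
    "\<And>q. mmul1 (sigma (k q)) (sigma (m q)) = (\<lambda>a b. e q * mmul1 (sigma (m q)) (sigma (k q)) a b)"
    by metis
  have "(\<Prod>q\<in>Q. e q) = 1 \<or> (\<Prod>q\<in>Q. e q) = -1"
    using assms
  proof (induction Q rule: finite_induct)
    case (insert a F)
    then show ?case using e(1)[of a] by auto
  qed simp
  moreover have "mmul Q (prodop Q (\<lambda>q. sigma (k q))) (prodop Q (\<lambda>q. sigma (m q))) =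
      scal (\<Prod>q\<in>Q. e q) (mmul Q (prodop Q (\<lambda>q. sigma (m q))) (prodop Q (\<lambda>q. sigma (k q))))"
    by (simp add: prodop_mmul[OF assms] e(2) prodop_scalar_factors)
  ultimately show ?thesis by blast
qed

text \<open>Distinct Pauli strings are orthogonal for the trace inner product.\<close>

lemma pauli_trace_nonzero_imp_multiple:
  assumes "finite Q" "P \<in> pauli_ops Q" "P' \<in> pauli_ops Q"
    and "trace Q (mmul Q (adj P) P') \<noteq> 0"
  shows "\<exists>a. a \<noteq> 0 \<and> P' = scal a P"
proof -
  obtain c m where c: "c \<in> {1, -1, \<i>, - \<i>}" "\<forall>q. m q < 4"
    and P: "P = scal c (prodop Q (\<lambda>q. sigma (m q)))"
    using assms(2) by (auto elim!: pauli_opsE)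
  obtain c' m' where c': "c' \<in> {1, -1, \<i>, - \<i>}" "\<forall>q. m' q < 4"
    and P': "P' = scal c' (prodop Q (\<lambda>q. sigma (m' q)))"
    using assms(3) by (auto elim!: pauli_opsE)
  have "trace Q (mmul Q (adj P) P') =
      cnj c * c' * trace Q (prodop Q (\<lambda>q. mmul1 (sigma (m q)) (sigma (m' q))))"
    unfolding P P' adj_scal adj_prodop mmul_scal_left mmul_scal_right prodop_mmul[OF assms(1)] trace_scal
    by simp
  also have "\<dots> = cnj c * c' * (\<Prod>q\<in>Q. if m q = m' q then 2 else 0)"
    unfolding trace_prodop[OF assms(1)] using c(2) c'(2) by (simp add: sigma_trace)
  finally have tr: "trace Q (mmul Q (adj P) P') = cnj c * c' * (\<Prod>q\<in>Q. if m q = m' q then 2 else 0)" .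
  then have "(\<Prod>q\<in>Q. if m q = m' q then 2 else 0) \<noteq> (0::complex)"
    using assms(4) by auto
  then have "\<forall>q\<in>Q. m q = m' q"
    by (rule contrapos_np) (auto simp: prod_zero_iff[OF assms(1)])
  then have "prodop Q (\<lambda>q. sigma (m' q)) = prodop Q (\<lambda>q. sigma (m q))"
    by (intro prodop_cong) simp
  moreover have "c \<noteq> 0"
    using c(1) by auto
  ultimately have "P' = scal (c' / c) P"
    by (simp add: P P' scal_scal)
  moreover have "c' / c \<noteq> 0"
    using c(1) c'(1) by auto
  ultimately show ?thesis by blast
qed

definition lincomb :: "'i set \<Rightarrow> ('i \<Rightarrow> complex) \<Rightarrow> ('i \<Rightarrow> qop) \<Rightarrow> qop" where
  "lincomb I c F = (\<lambda>x y. \<Sum>i\<in>I. c i * F i x y)"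

lemma lincomb_cong: "(\<And>i. i \<in> I \<Longrightarrow> F i = F' i) \<Longrightarrow> lincomb I c F = lincomb I c F'"
  unfolding lincomb_def by (simp cong: sum.cong)

lemma mmul_lincomb_right: "mmul Q A (lincomb I c F) = lincomb I c (\<lambda>i. mmul Q A (F i))"
  unfolding lincomb_def mmul_def
  by (intro ext) (simp add: sum_distrib_left algebra_simps sum.swap[of _ I])

lemma mmul_lincomb_left: "mmul Q (lincomb I c F) B = lincomb I c (\<lambda>i. mmul Q (F i) B)"
  unfolding lincomb_def mmul_def
  by (intro ext) (simp add: sum_distrib_left sum_distrib_right algebra_simps sum.swap[of _ I])

lemma trace_lincomb: "trace Q (lincomb I c F) = (\<Sum>i\<in>I. c i * trace Q (F i))"
  unfolding lincomb_def trace_def by (simp add: sum_distrib_left sum.swap[of _ I])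

lemma tens_lincomb_left: "tens Q1 Q2 (lincomb I c F) B = lincomb I c (\<lambda>i. tens Q1 Q2 (F i) B)"
  by (intro ext) (auto simp: tens_apply lincomb_def sum_distrib_right mult.assoc)

definition pauli_idx :: "bool \<Rightarrow> bool \<Rightarrow> nat" where
  "pauli_idx a b = (if a then (if b then 2 else 1) else (if b then 3 else 0))"

lemma pauli_idx_less [simp]: "pauli_idx a b < 4"
  by (simp add: pauli_idx_def)

lemma pauli_idx_False [simp]: "pauli_idx False False = 0"
  by (simp add: pauli_idx_def)

lemma sigma_pauli_idx_completeness:
  "(\<Sum>a\<in>UNIV. \<Sum>b\<in>UNIV. cnj (sigma (pauli_idx a b) x' y') * sigma (pauli_idx a b) x y) =
   (if x' = x \<and> y' = y then 2 else 0)"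
  by (cases x; cases y; cases x'; cases y') (simp_all add: UNIV_bool sigma_def pauli_idx_def)

text \<open>Up to phase, \<open>pauli_xz Q a b\<close> is the Pauli string with X-part \<open>a\<close> and Z-part \<open>b\<close>.\<close>

definition pauli_xz :: "nat set \<Rightarrow> cfg \<Rightarrow> cfg \<Rightarrow> qop" where
  "pauli_xz Q a b = prodop Q (\<lambda>q. sigma (pauli_idx (a q) (b q)))"

definition pauli_coeff :: "nat set \<Rightarrow> qop \<Rightarrow> cfg \<times> cfg \<Rightarrow> complex" where
  "pauli_coeff Q A p =
     (1/2) ^ card Q * (\<Sum>x\<in>cfgs Q. \<Sum>y\<in>cfgs Q. cnj (pauli_xz Q (fst p) (snd p) x y) * A x y)"

lemma pauli_xz_in_pauli_ops: "pauli_xz Q a b \<in> pauli_ops Q"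
  using pauli_opsI[of 1 "\<lambda>q. pauli_idx (a q) (b q)" Q] by (simp add: pauli_xz_def)

lemma pauli_xz_Un:
  assumes "finite Q1" "finite Q2" "Q1 \<inter> Q2 = {}" "a \<in> cfgs Q1" "b \<in> cfgs Q1"
  shows "pauli_xz (Q1 \<union> Q2) a b = tens Q1 Q2 (pauli_xz Q1 a b) (ident Q2)"
proof -
  have "prodop Q2 (\<lambda>q. sigma (pauli_idx (a q) (b q))) = ident Q2"
  proof (rule prodop_eq_ident[OF assms(2)])
    fix q assume "q \<in> Q2"
    then have "\<not> a q" "\<not> b q"
      using assms(3-5) by (auto simp: cfgs_def)
    then show "sigma (pauli_idx (a q) (b q)) = ident1"
      by (simp add: sigma_0)
  qed
  then show ?thesis
    unfolding pauli_xz_def by (simp add: prodop_Un[OF assms(1-3)])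
qed

lemma sum_cfgs_pairs_prod:
  fixes h :: "nat \<Rightarrow> bool \<Rightarrow> bool \<Rightarrow> complex"
  assumes "finite Q"
  shows "(\<Sum>p\<in>cfgs Q \<times> cfgs Q. \<Prod>q\<in>Q. h q (fst p q) (snd p q)) =
    (\<Prod>q\<in>Q. \<Sum>a\<in>UNIV. \<Sum>b\<in>UNIV. h q a b)"
proof -
  have "(\<Sum>p\<in>cfgs Q \<times> cfgs Q. \<Prod>q\<in>Q. h q (fst p q) (snd p q)) =
      (\<Sum>a\<in>cfgs Q. \<Sum>b\<in>cfgs Q. \<Prod>q\<in>Q. h q (a q) (b q))"
    by (simp add: sum.cartesian_product case_prod_beta)
  also have "\<dots> = (\<Sum>a\<in>cfgs Q. \<Prod>q\<in>Q. h q (a q) True + h q (a q) False)"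
    by (intro sum.cong refl) (rule sum_cfgs_prod[OF assms])
  also have "\<dots> = (\<Prod>q\<in>Q. (h q True True + h q True False) + (h q False True + h q False False))"
    by (rule sum_cfgs_prod[OF assms])
  finally show ?thesis
    by (simp add: UNIV_bool add_ac)
qed

lemma pauli_xz_completeness:
  assumes fin: "finite Q" and cfgs: "x \<in> cfgs Q" "y \<in> cfgs Q" "x' \<in> cfgs Q" "y' \<in> cfgs Q"
  shows "(1/2) ^ card Q * (\<Sum>p\<in>cfgs Q \<times> cfgs Q.
      cnj (pauli_xz Q (fst p) (snd p) x' y') * pauli_xz Q (fst p) (snd p) x y) =
    (if x' = x \<and> y' = y then 1 else 0)"
proof -
  define h where "h q a b = (1/2) * (cnj (sigma (pauli_idx a b) (x' q) (y' q)) *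
      sigma (pauli_idx a b) (x q) (y q))" for q a b
  have "(1/2) ^ card Q * (\<Sum>p\<in>cfgs Q \<times> cfgs Q.
      cnj (pauli_xz Q (fst p) (snd p) x' y') * pauli_xz Q (fst p) (snd p) x y) =
      (\<Sum>p\<in>cfgs Q \<times> cfgs Q. \<Prod>q\<in>Q. h q (fst p q) (snd p q))"
    unfolding sum_distrib_left
  proof (rule sum.cong[OF refl])
    fix p
    have "(\<Prod>q\<in>Q. h q (fst p q) (snd p q)) = (\<Prod>q\<in>Q. 1/2) *
        ((\<Prod>q\<in>Q. cnj (sigma (pauli_idx (fst p q) (snd p q)) (x' q) (y' q))) *
         (\<Prod>q\<in>Q. sigma (pauli_idx (fst p q) (snd p q)) (x q) (y q)))"
      unfolding h_def prod.distrib ..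
    then show "(1/2) ^ card Q * (cnj (pauli_xz Q (fst p) (snd p) x' y') * pauli_xz Q (fst p) (snd p) x y) =
        (\<Prod>q\<in>Q. h q (fst p q) (snd p q))"
      using cfgs by (simp only: pauli_xz_def prodop_apply cnj_prod if_True simp_thms prod_constant)
  qed
  also have "\<dots> = (\<Prod>q\<in>Q. \<Sum>a\<in>UNIV. \<Sum>b\<in>UNIV. h q a b)"
    by (rule sum_cfgs_pairs_prod[OF fin])
  also have "\<dots> = (\<Prod>q\<in>Q. if x' q = x q \<and> y' q = y q then 1 else 0)"
  proof (rule prod.cong[OF refl])
    fix q
    have "(\<Sum>a\<in>UNIV. \<Sum>b\<in>UNIV. h q a b) = (1/2) * (\<Sum>a\<in>UNIV. \<Sum>b\<in>UNIV.
        cnj (sigma (pauli_idx a b) (x' q) (y' q)) * sigma (pauli_idx a b) (x q) (y q))"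
      unfolding h_def by (simp add: sum_distrib_left)
    also have "\<dots> = (if x' q = x q \<and> y' q = y q then 1 else 0)"
      by (simp add: sigma_pauli_idx_completeness)
    finally show "(\<Sum>a\<in>UNIV. \<Sum>b\<in>UNIV. h q a b) = (if x' q = x q \<and> y' q = y q then 1 else 0)" .
  qed
  also have "\<dots> = (if \<forall>q\<in>Q. x' q = x q \<and> y' q = y q then \<Prod>q\<in>Q. 1 else 0)"
    by (rule prod_if_zero[OF fin])
  also have "(\<forall>q\<in>Q. x' q = x q \<and> y' q = y q) \<longleftrightarrow> x' = x \<and> y' = y"
    using cfgs_eq_iff[OF cfgs(3,1)] cfgs_eq_iff[OF cfgs(4,2)] by blast
  finally show ?thesis by simp
qed

lemma pauli_expansion:
  assumes fin: "finite Q" and A: "isop Q Q A"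
  shows "A = lincomb (cfgs Q \<times> cfgs Q) (pauli_coeff Q A) (\<lambda>p. pauli_xz Q (fst p) (snd p))"
proof (rule isop_eqI[OF A])
  show "isop Q Q (lincomb (cfgs Q \<times> cfgs Q) (pauli_coeff Q A) (\<lambda>p. pauli_xz Q (fst p) (snd p)))"
    by (rule isopI) (auto simp: lincomb_def pauli_xz_def prodop_apply)
  fix x y assume xy: "x \<in> cfgs Q" "y \<in> cfgs Q"
  have "lincomb (cfgs Q \<times> cfgs Q) (pauli_coeff Q A) (\<lambda>p. pauli_xz Q (fst p) (snd p)) x y =
      (\<Sum>x'\<in>cfgs Q. \<Sum>y'\<in>cfgs Q. A x' y' * ((1/2) ^ card Q * (\<Sum>p\<in>cfgs Q \<times> cfgs Q.
        cnj (pauli_xz Q (fst p) (snd p) x' y') * pauli_xz Q (fst p) (snd p) x y)))"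
    by (simp add: lincomb_def pauli_coeff_def sum_distrib_left sum_distrib_right
        sum.swap[of _ "cfgs Q \<times> cfgs Q"] algebra_simps)
  also have "\<dots> = (\<Sum>x'\<in>cfgs Q. \<Sum>y'\<in>cfgs Q. A x' y' * (if x' = x \<and> y' = y then 1 else 0))"
    by (intro sum.cong refl) (simp add: pauli_xz_completeness[OF fin xy])
  also have "\<dots> = (\<Sum>x'\<in>cfgs Q. if x' = x then (\<Sum>y'\<in>cfgs Q. if y' = y then A x y else 0) else 0)"
    by (intro sum.cong refl) (auto intro!: sum.cong)
  also have "\<dots> = A x y"
    using fin xy by (simp add: sum.delta')
  finally show "A x y = lincomb (cfgs Q \<times> cfgs Q) (pauli_coeff Q A) (\<lambda>p. pauli_xz Q (fst p) (snd p)) x y"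
    by simp
qed

definition toggle :: "nat \<Rightarrow> cfg \<Rightarrow> cfg" where
  "toggle q x = x(q := \<not> x q)"

definition sign :: "bool \<Rightarrow> complex" where
  "sign b = (if b then -1 else 1)"

definition pauli_X :: "nat set \<Rightarrow> nat \<Rightarrow> qop" where
  "pauli_X Q q = prodop Q (\<lambda>r. sigma (if r = q then 1 else 0))"

definition pauli_Z :: "nat set \<Rightarrow> nat \<Rightarrow> qop" where
  "pauli_Z Q q = prodop Q (\<lambda>r. sigma (if r = q then 3 else 0))"

lemma toggle_toggle [simp]: "toggle q (toggle q x) = x"
  by (simp add: toggle_def fun_eq_iff)

lemma toggle_in_cfgs [simp]: "q \<in> Q \<Longrightarrow> toggle q x \<in> cfgs Q \<longleftrightarrow> x \<in> cfgs Q"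
  by (auto simp: toggle_def cfgs_def split: if_splits)

lemma pauli_X_in_pauli_ops: "pauli_X Q q \<in> pauli_ops Q"
  using pauli_opsI[of 1 "\<lambda>r. if r = q then 1 else 0" Q] by (simp add: pauli_X_def)

lemma pauli_Z_in_pauli_ops: "pauli_Z Q q \<in> pauli_ops Q"
  using pauli_opsI[of 1 "\<lambda>r. if r = q then 3 else 0" Q] by (simp add: pauli_Z_def)

lemma pauli_X_apply:
  assumes "finite Q" "q \<in> Q" "x \<in> cfgs Q" "y \<in> cfgs Q"
  shows "pauli_X Q q x y = (if x = toggle q y then 1 else 0)"
proof -
  have "pauli_X Q q x y = (\<Prod>r\<in>Q. if (if r = q then x r \<noteq> y r else x r = y r) then 1 else 0)"
    unfolding pauli_X_def prodop_apply using assms(3,4)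
    by (simp, intro prod.cong refl) (auto simp: sigma_def)
  also have "\<dots> = (if \<forall>r\<in>Q. x r = toggle q y r then 1 else 0)"
    by (simp add: prod_if_zero[OF assms(1)] toggle_def)
  finally show ?thesis
    using assms by (simp add: cfgs_eq_iff)
qed

lemma pauli_Z_apply:
  assumes "finite Q" "q \<in> Q" "x \<in> cfgs Q" "y \<in> cfgs Q"
  shows "pauli_Z Q q x y = (if x = y then sign (y q) else 0)"
proof -
  have "pauli_Z Q q x y = (\<Prod>r\<in>Q. if x r = y r then (if r = q then sign (y r) else 1) else 0)"
    unfolding pauli_Z_def prodop_apply using assms(3,4)
    by (simp, intro prod.cong refl) (auto simp: sigma_def sign_def)
  also have "\<dots> = (if \<forall>r\<in>Q. x r = y r then \<Prod>r\<in>Q. (if r = q then sign (y r) else 1) else 0)"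
    by (rule prod_if_zero[OF assms(1)])
  finally show ?thesis
    using assms by (simp add: cfgs_eq_iff prod.delta)
qed

lemma mmul_pauli_X_right:
  assumes "finite Q" "q \<in> Q" "y \<in> cfgs Q"
  shows "mmul Q M (pauli_X Q q) x y = M x (toggle q y)"
proof -
  have "mmul Q M (pauli_X Q q) x y = (\<Sum>z\<in>cfgs Q. if z = toggle q y then M x (toggle q y) else 0)"
    unfolding mmul_def by (rule sum.cong) (auto simp: pauli_X_apply assms)
  then show ?thesis
    using assms by (simp add: sum.delta')
qed

lemma mmul_pauli_X_left:
  assumes "finite Q" "q \<in> Q" "x \<in> cfgs Q"
  shows "mmul Q (pauli_X Q q) M x y = M (toggle q x) y"
proof -
  have "x = toggle q z \<longleftrightarrow> z = toggle q x" for z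
    by (auto simp: toggle_def fun_eq_iff)
  then have "mmul Q (pauli_X Q q) M x y = (\<Sum>z\<in>cfgs Q. if z = toggle q x then M (toggle q x) y else 0)"
    unfolding mmul_def by (intro sum.cong) (auto simp: pauli_X_apply assms)
  then show ?thesis
    using assms by (simp add: sum.delta')
qed

lemma mmul_pauli_Z_right:
  assumes "finite Q" "q \<in> Q" "y \<in> cfgs Q"
  shows "mmul Q M (pauli_Z Q q) x y = M x y * sign (y q)"
proof -
  have "mmul Q M (pauli_Z Q q) x y = (\<Sum>z\<in>cfgs Q. if z = y then M x y * sign (y q) else 0)"
    unfolding mmul_def by (rule sum.cong) (auto simp: pauli_Z_apply assms)
  then show ?thesis
    using assms by (simp add: sum.delta')
qed

lemma mmul_pauli_Z_left:
  assumes "finite Q" "q \<in> Q" "x \<in> cfgs Q"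
  shows "mmul Q (pauli_Z Q q) M x y = sign (x q) * M x y"
proof -
  have "mmul Q (pauli_Z Q q) M x y = (\<Sum>z\<in>cfgs Q. if z = x then sign (x q) * M x y else 0)"
    unfolding mmul_def by (rule sum.cong) (auto simp: pauli_Z_apply assms)
  then show ?thesis
    using assms by (simp add: sum.delta')
qed

definition cfg_xor :: "cfg \<Rightarrow> cfg \<Rightarrow> cfg" where
  "cfg_xor b x = (\<lambda>q. x q \<noteq> b q)"

lemma cfg_xor_in_cfgs: "b \<in> cfgs Q \<Longrightarrow> x \<in> cfgs Q \<Longrightarrow> cfg_xor b x \<in> cfgs Q"
  by (auto simp: cfg_xor_def cfgs_def)

lemma cfg_xor_toggle: "cfg_xor b (toggle q x) = toggle q (cfg_xor b x)"
  by (auto simp: cfg_xor_def toggle_def fun_eq_iff)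

lemma sign_ratio_eq:
  "sign y0 = c * sign x0 \<Longrightarrow> sign y = c * sign x \<Longrightarrow> (x \<noteq> y) = (x0 \<noteq> y0)"
  by (cases x0; cases y0; cases x; cases y) (auto simp: sign_def)

text \<open>Commuting up to phase with every \<open>Z\<close> pins the bit-flip pattern of all nonzero entries.\<close>

lemma commutes_up_to_phase_with_Z_support:
  assumes fin: "finite S" and M: "isop S S M"
    and hZ: "\<And>q. q \<in> S \<Longrightarrow> \<exists>\<alpha>. mmul S M (pauli_Z S q) = scal \<alpha> (mmul S (pauli_Z S q) M)"
    and "M x0 y0 \<noteq> 0" "M x y \<noteq> 0"
  shows "y = cfg_xor (cfg_xor x0 y0) x"
proof
  fix q
  have cfgs: "x0 \<in> cfgs S" "y0 \<in> cfgs S" "x \<in> cfgs S" "y \<in> cfgs S"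
    using assms(4,5) isopD[OF M] by blast+
  show "y q = cfg_xor (cfg_xor x0 y0) x q"
  proof (cases "q \<in> S")
    case True
    obtain \<alpha> where \<alpha>: "mmul S M (pauli_Z S q) = scal \<alpha> (mmul S (pauli_Z S q) M)"
      using hZ[OF True] by blast
    have "M x' y' * sign (y' q) = M x' y' * (\<alpha> * sign (x' q))" if "x' \<in> cfgs S" "y' \<in> cfgs S" for x' y'
      using fun_cong[OF fun_cong[OF \<alpha>, of x'], of y'] that fin True
      by (simp add: mmul_pauli_Z_left mmul_pauli_Z_right scal_def ac_simps)
    then have "sign (y0 q) = \<alpha> * sign (x0 q)" "sign (y q) = \<alpha> * sign (x q)"
      using assms(4,5) cfgs by auto
    then have "(x q \<noteq> y q) = (x0 q \<noteq> y0 q)"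
      by (rule sign_ratio_eq)
    then show ?thesis
      by (auto simp: cfg_xor_def)
  next
    case False
    then show ?thesis
      using cfgs by (auto simp: cfg_xor_def cfgs_def)
  qed
qed

lemma commutes_up_to_phase_with_X_diagonal:
  assumes fin: "finite S" and q: "q \<in> S"
    and \<beta>: "mmul S M (pauli_X S q) = scal \<beta> (mmul S (pauli_X S q) M)"
    and b: "b \<in> cfgs S" and x: "x \<in> cfgs S"
  shows "M x (cfg_xor b x) = \<beta> * M (toggle q x) (cfg_xor b (toggle q x))"
proof -
  have y: "toggle q (cfg_xor b x) \<in> cfgs S"
    using q cfg_xor_in_cfgs[OF b x] by simp
  show ?thesis
    using fun_cong[OF fun_cong[OF \<beta>, of x], of "toggle q (cfg_xor b x)"]
    by (simp add: mmul_pauli_X_left[OF fin q x] mmul_pauli_X_right[OF fin q y] scal_def cfg_xor_toggle)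
qed

lemma toggle_multiplicative_product:
  fixes d :: "cfg \<Rightarrow> complex"
  assumes "finite T" "\<And>q x. q \<in> T \<Longrightarrow> x \<in> cfgs T \<Longrightarrow> d (toggle q x) = \<beta> q * d x"
    and "x \<in> cfgs T"
  shows "d x = d zero_cfg * (\<Prod>q\<in>T. if x q then \<beta> q else 1)"
  using assms
proof (induction T arbitrary: x rule: finite_induct)
  case empty
  then show ?case by (simp add: cfgs_empty zero_cfg_def)
next
  case (insert a T)
  define x' where "x' = x(a := False)"
  have x': "x' \<in> cfgs T"
    using insert(5) by (auto simp: x'_def cfgs_def)
  have "cfgs T \<subseteq> cfgs (insert a T)"
    by (rule cfgs_mono) blast
  then have "d x' = d zero_cfg * (\<Prod>q\<in>T. if x' q then \<beta> q else 1)"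
    using insert.IH[OF _ x'] insert(4) by blast
  also have "(\<Prod>q\<in>T. if x' q then \<beta> q else 1) = (\<Prod>q\<in>T. if x q then \<beta> q else 1)"
    using insert(2) by (intro prod.cong refl) (auto simp: x'_def)
  finally have IH: "d x' = d zero_cfg * (\<Prod>q\<in>T. if x q then \<beta> q else 1)" .
  show ?case
  proof (cases "x a")
    case True
    then have "x = toggle a x'"
      by (auto simp: x'_def toggle_def fun_eq_iff)
    moreover have "x' \<in> cfgs (insert a T)"
      using x' \<open>cfgs T \<subseteq> cfgs (insert a T)\<close> by blast
    ultimately have "d x = \<beta> a * d x'"
      using insert(4) by simp
    then show ?thesis
      using True IH insert(1,2) by simp
  next
    case False
    then have "x' = x"
      by (auto simp: x'_def fun_eq_iff)
    then show ?thesis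
      using False IH insert(1,2) by simp
  qed
qed

lemma sigma_flip_phase_pattern:
  assumes "\<beta> = 1 \<or> \<beta> = -1"
  shows "\<exists>k \<omega>. k < 4 \<and> \<omega> \<noteq> 0 \<and>
    (\<forall>a c. sigma k a c = (if c = (a \<noteq> b) then \<omega> * (if a then \<beta> else 1) else 0))"
proof -
  define k where "k = (if b then (if \<beta> = 1 then 1 else 2) else (if \<beta> = 1 then 0 else 3 :: nat))"
  define \<omega> where "\<omega> = (if b \<and> \<beta> \<noteq> 1 then - \<i> else 1)"
  have "sigma k a c = (if c = (a \<noteq> b) then \<omega> * (if a then \<beta> else 1) else 0)" for a c
    using assms by (cases b; cases a; cases c) (auto simp: k_def \<omega>_def sigma_def)
  then show ?thesis
    by (intro exI[of _ k] exI[of _ \<omega>]) (simp add: k_def \<omega>_def)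
qed

lemma commutes_up_to_phase_with_X_diagonal_signs:
  assumes fin: "finite S"
    and hX: "\<And>q. q \<in> S \<Longrightarrow> \<exists>\<beta>. mmul S M (pauli_X S q) = scal \<beta> (mmul S (pauli_X S q) M)"
    and b: "b \<in> cfgs S" and x0: "x0 \<in> cfgs S" "M x0 (cfg_xor b x0) \<noteq> 0"
  obtains \<beta> where "\<And>q. q \<in> S \<Longrightarrow> \<beta> q = 1 \<or> \<beta> q = -1"
    "\<And>x. x \<in> cfgs S \<Longrightarrow>
      M x (cfg_xor b x) = M zero_cfg (cfg_xor b zero_cfg) * (\<Prod>q\<in>S. if x q then \<beta> q else 1)"
proof -
  define d where "d x = M x (cfg_xor b x)" for x
  have "\<exists>\<beta>. \<forall>x\<in>cfgs S. d (toggle q x) = \<beta> * d x" if q: "q \<in> S" for q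
  proof -
    obtain \<beta> where "mmul S M (pauli_X S q) = scal \<beta> (mmul S (pauli_X S q) M)"
      using hX[OF q] by blast
    then have "d (toggle q x) = \<beta> * d x" if "x \<in> cfgs S" for x
      using commutes_up_to_phase_with_X_diagonal[OF fin q _ b, of M \<beta> "toggle q x"] q that
      by (simp add: d_def)
    then show ?thesis by blast
  qed
  then obtain \<beta> where \<beta>: "\<And>q x. q \<in> S \<Longrightarrow> x \<in> cfgs S \<Longrightarrow> d (toggle q x) = \<beta> q * d x"
    by metis
  have "d x0 \<noteq> 0"
    using x0(2) by (simp add: d_def)
  have \<beta>_pm: "\<beta> q = 1 \<or> \<beta> q = -1" if q: "q \<in> S" for q
  proof -
    have "d (toggle q (toggle q x0)) = \<beta> q * d (toggle q x0)"
      by (rule \<beta>[OF q toggle_in_cfgs[OF q, THEN iffD2, OF x0(1)]])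
    then have "d x0 = \<beta> q * (\<beta> q * d x0)"
      unfolding toggle_toggle \<beta>[OF q x0(1)] .
    then have "\<beta> q * \<beta> q = 1"
      using \<open>d x0 \<noteq> 0\<close> by (metis mult.assoc mult_cancel_right1)
    then show ?thesis
      by (metis (no_types) mult_cancel_left1 square_eq_1_iff)
  qed
  have "d x = d zero_cfg * (\<Prod>q\<in>S. if x q then \<beta> q else 1)" if "x \<in> cfgs S" for x
    by (rule toggle_multiplicative_product[OF fin \<beta> that])
  then show thesis
    using that[of \<beta>, OF \<beta>_pm] unfolding d_def by blast
qed

lemma pauli_string_flip_phase:
  assumes fin: "finite S" and b: "b \<in> cfgs S" and \<beta>: "\<And>q. q \<in> S \<Longrightarrow> \<beta> q = 1 \<or> \<beta> q = -1"
  obtains k c where "\<forall>q. k q < 4" "c \<noteq> 0"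
    "\<And>x y. x \<in> cfgs S \<Longrightarrow> y \<in> cfgs S \<Longrightarrow> prodop S (\<lambda>q. sigma (k q)) x y =
       (if y = cfg_xor b x then c * (\<Prod>q\<in>S. if x q then \<beta> q else 1) else 0)"
proof -
  have "\<exists>k \<omega>. k < 4 \<and> \<omega> \<noteq> 0 \<and> (q \<in> S \<longrightarrow>
      (\<forall>a c. sigma k a c = (if c = (a \<noteq> b q) then \<omega> * (if a then \<beta> q else 1) else 0)))" for q
    using sigma_flip_phase_pattern[OF \<beta>] by (cases "q \<in> S") (auto intro!: exI[of _ 0] exI[of _ 1])
  then obtain k \<omega> where k: "\<And>q. k q < 4" "\<And>q. \<omega> q \<noteq> 0"
    "\<And>q a c. q \<in> S \<Longrightarrow> sigma (k q) a c = (if c = (a \<noteq> b q) then \<omega> q * (if a then \<beta> q else 1) else 0)"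
    by metis
  have "prodop S (\<lambda>q. sigma (k q)) x y =
      (if y = cfg_xor b x then (\<Prod>q\<in>S. \<omega> q) * (\<Prod>q\<in>S. if x q then \<beta> q else 1) else 0)"
    if xy: "x \<in> cfgs S" "y \<in> cfgs S" for x y
  proof -
    have "prodop S (\<lambda>q. sigma (k q)) x y =
        (\<Prod>q\<in>S. if y q = cfg_xor b x q then \<omega> q * (if x q then \<beta> q else 1) else 0)"
      using xy k(3) by (simp add: prodop_apply cfg_xor_def cong: prod.cong)
    then show ?thesis
      using cfgs_eq_iff[OF xy(2) cfg_xor_in_cfgs[OF b xy(1)]] by (simp add: prod_if_zero[OF fin] prod.distrib)
  qed
  moreover have "(\<Prod>q\<in>S. \<omega> q) \<noteq> 0"
    using fin k(2) by simp
  ultimately show ?thesis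
    using that k(1) by blast
qed

text \<open>The Z-relations force the support onto one bit-flip pattern, and the X-relations force the
  entries along that pattern to be a product of signs.\<close>

lemma pauli_multiple_if_commutes_up_to_phase:
  assumes fin: "finite S" and M: "isop S S M"
    and hX: "\<And>q. q \<in> S \<Longrightarrow> \<exists>\<beta>. mmul S M (pauli_X S q) = scal \<beta> (mmul S (pauli_X S q) M)"
    and hZ: "\<And>q. q \<in> S \<Longrightarrow> \<exists>\<alpha>. mmul S M (pauli_Z S q) = scal \<alpha> (mmul S (pauli_Z S q) M)"
  shows "\<exists>c P. P \<in> pauli_ops S \<and> M = scal c P"
proof (cases "\<forall>x y. M x y = 0")
  case True
  then have "M = scal 0 (pauli_X S 0)"
    by (simp add: scal_def fun_eq_iff)
  then show ?thesis
    using pauli_X_in_pauli_ops by blast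
next
  case False
  then obtain x0 y0 where m0: "M x0 y0 \<noteq> 0"
    by blast
  have x0: "x0 \<in> cfgs S" and y0: "y0 \<in> cfgs S"
    using m0 isopD[OF M] by blast+
  define b where "b = cfg_xor x0 y0"
  have b: "b \<in> cfgs S"
    using cfg_xor_in_cfgs[OF x0 y0] by (simp add: b_def)
  have "cfg_xor b x0 = y0"
    by (auto simp: cfg_xor_def b_def fun_eq_iff)
  then have "M x0 (cfg_xor b x0) \<noteq> 0"
    using m0 by simp
  then obtain \<beta> where \<beta>: "\<And>q. q \<in> S \<Longrightarrow> \<beta> q = 1 \<or> \<beta> q = -1"
    "\<And>x. x \<in> cfgs S \<Longrightarrow> M x (cfg_xor b x) = M zero_cfg (cfg_xor b zero_cfg) * (\<Prod>q\<in>S. if x q then \<beta> q else 1)"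
    using commutes_up_to_phase_with_X_diagonal_signs[OF fin hX b x0] by blast
  obtain k c where k: "\<forall>q. k q < 4" "c \<noteq> 0"
    "\<And>x y. x \<in> cfgs S \<Longrightarrow> y \<in> cfgs S \<Longrightarrow> prodop S (\<lambda>q. sigma (k q)) x y =
       (if y = cfg_xor b x then c * (\<Prod>q\<in>S. if x q then \<beta> q else 1) else 0)"
    using pauli_string_flip_phase[of S b \<beta>, OF fin b \<beta>(1)] by blast
  have "M = scal (M zero_cfg (cfg_xor b zero_cfg) / c) (prodop S (\<lambda>q. sigma (k q)))"
  proof (rule isop_eqI[OF M isop_scal[OF isop_prodop]])
    fix x y assume xy: "x \<in> cfgs S" "y \<in> cfgs S"
    have "M x y = 0" if "y \<noteq> cfg_xor b x"
      using commutes_up_to_phase_with_Z_support[OF fin M hZ m0, of x y] that by (auto simp: b_def)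
    then show "M x y = scal (M zero_cfg (cfg_xor b zero_cfg) / c) (prodop S (\<lambda>q. sigma (k q))) x y"
      using k(2) k(3)[OF xy] \<beta>(2)[OF xy(1)] by (auto simp: scal_def)
  qed
  then show ?thesis
    using pauli_opsI[of 1 k S] k(1) by force
qed

section \<open>A criterion for the second level of the Clifford hierarchy\<close>

text \<open>The logical factor of a dressed unitary is only determined up to a scalar, so \<open>W\<close> is
  assumed unitary up to nonzero scalars.\<close>

lemma cliff_2_if_commutators_scalar:
  assumes fin: "finite S" and W: "isop S S W"
    and unitary: "mmul S (adj W) W = scal \<mu> (ident S)" "mmul S W (adj W) = scal \<mu>' (ident S)"
      "\<mu> \<noteq> 0" "\<mu>' \<noteq> 0"
    and comm: "\<And>P Q. P \<in> pauli_ops S \<Longrightarrow> Q \<in> pauli_ops S \<Longrightarrow>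
      \<exists>c. commutator S (commutator S W P) Q = scal c (ident S)"
  shows "W \<in> cliff S 2"
proof -
  have "commutator S W P \<in> cliff S 1" if "P \<in> pauli_ops S" for P
  proof -
    define M where "M = commutator S W P"
    have isoP: "isop S S P" "isop S S (adj P)"
      using isop_pauli[OF that] by (simp_all add: isop_adj)
    have isoM: "isop S S M"
      unfolding M_def commutator_def by (intro isop_mmul isop_adj W isoP(1))
    have MM: "mmul S (adj M) M = scal (\<mu> * \<mu>') (ident S)"
      unfolding M_def adj_commutator unfolding commutator_def
      by (simp add: mmul_assoc mmul_scalar_cancel[OF fin] mmul_ident_cancel[OF fin] unitary(1,2)
          pauli_unitary[OF fin that] mmul_scal_right scal_scal isop_mmul isop_adj W isoP mult.commute)
    have "\<exists>\<alpha>. mmul S M A = scal \<alpha> (mmul S A M)" if A: "A \<in> pauli_ops S" for A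
    proof -
      obtain c where "commutator S M A = scal c (ident S)"
        using comm[OF \<open>P \<in> pauli_ops S\<close> A] by (auto simp: M_def)
      then show ?thesis
        using commutes_up_to_phase_if_commutator_scalar[OF fin isoM isop_pauli[OF A] MM]
          unitary(3,4) pauli_unitary(1)[OF fin A] by auto
    qed
    then obtain c P' where "P' \<in> pauli_ops S" "M = scal c P'"
      using pauli_multiple_if_commutes_up_to_phase[OF fin isoM]
        pauli_X_in_pauli_ops pauli_Z_in_pauli_ops by metis
    then show ?thesis
      by (auto simp: M_def)
  qed
  moreover have "commutator S W (scal c P) = scal (c * cnj c) (commutator S W P)" for c P
    by (rule commutator_scal_right)
  ultimately have "commutator S W P0 \<in> cliff S 1" if "P0 \<in> cliff S 1" for P0
    using that by (fastforce simp: scal_scal)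
  then show ?thesis
    using W by (simp add: cliff_2_eq)
qed

section \<open>Stabilizer codes with a logical subsystem\<close>

locale logical_subsystem =
  fixes n nL :: nat and G :: "qop set" and V :: qop and S :: "nat set"
  assumes code: "stabilizer_code n nL G V" and S_subset: "S \<subseteq> {..<nL}"
begin

abbreviation "Phys \<equiv> {..<n}"
abbreviation "Enc \<equiv> {..<nL}"
abbreviation "Junk \<equiv> {..<nL} - S"
abbreviation "Proj \<equiv> code_proj n nL V"

lemma finite_S [simp]: "finite S"
  using S_subset finite_subset by blast

lemma finite_Junk: "finite Junk"
  by simp

lemma S_Un_Junk [simp]: "S \<union> Junk = Enc"
  using S_subset by blast

lemma S_Un_Enc [simp]: "S \<union> Enc = Enc"
  using S_subset by blast

lemma S_Junk_disjoint [simp]: "S \<inter> Junk = {}"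
  by blast

lemma isop_V: "isop Phys Enc V"
  using code by (simp add: stabilizer_code_def)

lemma V_isometry: "mmul Phys (adj V) V = ident Enc"
  using code by (simp add: stabilizer_code_def)

lemma stabilizer_pauli: "g \<in> G \<Longrightarrow> g \<in> pauli_ops Phys"
  using code by (auto simp: stabilizer_code_def)

lemma code_space:
  "{\<psi>. isop Phys {} \<psi> \<and> (\<forall>g\<in>G. mmul Phys g \<psi> = \<psi>)} = {mmul Enc V \<phi> | \<phi>. isop Enc {} \<phi>}"
  using code by (simp add: stabilizer_code_def)

lemma logical_action_pauli:
  "P \<in> pauli_ops Phys \<Longrightarrow> CSP n nL V P \<Longrightarrow> logical_action n V P \<in> pauli_ops Enc"
  using code unfolding stabilizer_code_def CSP_def logical_action_def by blast

lemma Proj_eq: "Proj = mmul Enc V (adj V)"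
  by (simp add: code_proj_def)

lemma adj_Proj: "adj Proj = Proj"
  by (simp add: Proj_eq adj_mmul)

lemma isop_Proj: "isop Phys Phys Proj"
  unfolding Proj_eq by (rule isop_mmul[OF isop_V isop_adj[OF isop_V]])

lemma Proj_V: "mmul Phys Proj V = V"
  unfolding Proj_eq mmul_assoc V_isometry by (rule mmul_ident_right[OF _ isop_V]) simp

lemma isop_logical_action: "isop Enc Enc (logical_action n V A)"
  unfolding logical_action_def by (rule isopI) (auto simp: mmul_def adj_def isopD[OF isop_V])

lemma V_cancel:
  assumes "isop Enc T X" "isop Enc T Y" "mmul Enc V X = mmul Enc V Y"
  shows "X = Y"
proof -
  have "X = mmul Phys (adj V) (mmul Enc V X)"
    by (simp add: mmul_assoc[symmetric] V_isometry mmul_ident_left[OF _ assms(1)])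
  also have "\<dots> = Y"
    by (simp add: assms(3) mmul_assoc[symmetric] V_isometry mmul_ident_left[OF _ assms(2)])
  finally show ?thesis .
qed

lemma CSP_mmul_V:
  assumes "CSP n nL V A"
  shows "mmul Phys A V = mmul Enc V (logical_action n V A)"
proof -
  have "mmul Phys A V = mmul Phys (mmul Phys A Proj) V"
    by (simp add: mmul_assoc Proj_V)
  also have "\<dots> = mmul Phys (mmul Phys Proj A) V"
    using assms by (simp add: CSP_def)
  finally show ?thesis
    by (simp add: Proj_eq mmul_assoc logical_action_def)
qed

lemma CSP_adj:
  assumes "CSP n nL V A"
  shows "CSP n nL V (adj A)"
proof -
  have "adj (mmul Phys A Proj) = adj (mmul Phys Proj A)"
    using assms by (simp add: CSP_def)
  then show ?thesis
    by (simp add: CSP_def adj_mmul adj_Proj)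
qed

lemma CSP_mmul: "CSP n nL V A \<Longrightarrow> CSP n nL V B \<Longrightarrow> CSP n nL V (mmul Phys A B)"
  unfolding CSP_def by (simp add: mmul_assoc) (simp add: mmul_assoc[symmetric])

lemma CSP_commutator: "CSP n nL V A \<Longrightarrow> CSP n nL V B \<Longrightarrow> CSP n nL V (commutator Phys A B)"
  unfolding commutator_def by (intro CSP_mmul CSP_adj)

lemma logical_action_adj: "logical_action n V (adj A) = adj (logical_action n V A)"
  by (simp add: logical_action_def adj_mmul mmul_assoc)

lemma logical_action_mmul:
  assumes "CSP n nL V A" "CSP n nL V B"
  shows "logical_action n V (mmul Phys A B) = mmul Enc (logical_action n V A) (logical_action n V B)"
proof -
  have "logical_action n V (mmul Phys A B) = mmul Phys (adj V) (mmul Phys A (mmul Phys B V))"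
    by (simp add: logical_action_def mmul_assoc)
  also have "\<dots> = mmul Phys (adj V) (mmul Enc (mmul Phys A V) (logical_action n V B))"
    by (simp add: CSP_mmul_V[OF assms(2)] mmul_assoc)
  also have "\<dots> = mmul Enc (mmul Phys (adj V) (mmul Enc V (logical_action n V A))) (logical_action n V B)"
    by (simp add: CSP_mmul_V[OF assms(1)] mmul_assoc)
  also have "\<dots> = mmul Enc (logical_action n V A) (logical_action n V B)"
    by (simp add: mmul_assoc[symmetric] V_isometry mmul_ident_left[OF _ isop_logical_action])
  finally show ?thesis .
qed

lemma logical_action_commutator:
  "CSP n nL V A \<Longrightarrow> CSP n nL V B \<Longrightarrow>
   logical_action n V (commutator Phys A B) = commutator Enc (logical_action n V A) (logical_action n V B)"
  by (simp add: commutator_def logical_action_mmul CSP_mmul CSP_adj logical_action_adj)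

lemma logical_action_lincomb:
  "logical_action n V (lincomb I c F) = lincomb I c (\<lambda>i. logical_action n V (F i))"
  unfolding logical_action_def by (simp add: mmul_lincomb_right mmul_lincomb_left)

lemma tens_S_mmul: "mmul Enc (tens S Junk A B) (tens S Junk C D) = tens S Junk (mmul S A C) (mmul Junk B D)"
  using tens_mmul[OF finite_S _ S_Junk_disjoint, of A B C D] by simp

lemma commutator_tens_S:
  "commutator Enc (tens S Junk A B) (tens S Junk C D) = tens S Junk (commutator S A C) (commutator Junk B D)"
  using commutator_tens[OF finite_S _ S_Junk_disjoint, of A B C D] by simp

lemma stabilizer_mmul_V:
  assumes "g \<in> G"
  shows "mmul Phys g V = V"
proof (rule eq_if_mmul_basis_vector_eq[OF _ isop_mmul[OF isop_pauli[OF stabilizer_pauli[OF assms]] isop_V] isop_V])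
  fix y
  have "mmul Enc V (basis_vector Enc y) \<in> {mmul Enc V \<phi> | \<phi>. isop Enc {} \<phi>}"
    by auto
  then have "mmul Phys g (mmul Enc V (basis_vector Enc y)) = mmul Enc V (basis_vector Enc y)"
    using assms by (simp add: code_space[symmetric])
  then show "mmul Enc (mmul Phys g V) (basis_vector Enc y) = mmul Enc V (basis_vector Enc y)"
    by (simp add: mmul_assoc)
qed simp

lemma adj_V_mmul_stabilizer:
  assumes "g \<in> G"
  shows "mmul Phys (adj V) g = adj V"
proof -
  have "mmul Phys (adj g) V = mmul Phys (mmul Phys (adj g) g) V"
    by (simp add: mmul_assoc stabilizer_mmul_V[OF assms])
  also have "\<dots> = V"
    by (simp add: pauli_unitary[OF _ stabilizer_pauli[OF assms]] mmul_ident_left[OF _ isop_V])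
  finally show ?thesis
    by (metis adj_adj adj_mmul)
qed

lemma logical_action_zero_if_anticommutes:
  assumes g: "g \<in> G" and anti: "mmul Phys A g = scal (-1) (mmul Phys g A)"
  shows "logical_action n V A = (\<lambda>x y. 0)"
proof -
  have "logical_action n V A = mmul Phys (adj V) (mmul Phys (mmul Phys A g) V)"
    by (simp add: logical_action_def mmul_assoc stabilizer_mmul_V[OF g])
  also have "\<dots> = scal (-1) (logical_action n V A)"
    by (simp add: anti mmul_scal_left mmul_scal_right mmul_assoc[symmetric] adj_V_mmul_stabilizer[OF g])
      (simp add: logical_action_def mmul_assoc)
  finally have "logical_action n V A = scal (-1) (logical_action n V A)" .
  then show ?thesis
    by (auto simp: scal_def fun_eq_iff dest: fun_cong)
qed

lemma Proj_mmul_V_if_commutes: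
  assumes A: "isop Phys Phys A" and comm: "\<forall>g\<in>G. mmul Phys A g = mmul Phys g A"
  shows "mmul Phys Proj (mmul Phys A V) = mmul Phys A V"
proof (rule eq_if_mmul_basis_vector_eq)
  show "isop Phys Enc (mmul Phys Proj (mmul Phys A V))" "isop Phys Enc (mmul Phys A V)"
    by (intro isop_mmul isop_Proj A isop_V)+
  fix y
  define \<psi> where "\<psi> = mmul Phys A (mmul Enc V (basis_vector Enc y))"
  have "mmul Phys g \<psi> = \<psi>" if g: "g \<in> G" for g
  proof -
    have "mmul Phys g \<psi> = mmul Enc (mmul Phys (mmul Phys g A) V) (basis_vector Enc y)"
      by (simp add: \<psi>_def mmul_assoc)
    also have "\<dots> = mmul Enc (mmul Phys (mmul Phys A g) V) (basis_vector Enc y)"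
      using comm g by simp
    also have "\<dots> = \<psi>"
      by (simp add: \<psi>_def mmul_assoc stabilizer_mmul_V[OF g])
    finally show ?thesis .
  qed
  moreover have "isop Phys {} \<psi>"
    unfolding \<psi>_def by (intro isop_mmul A isop_V isop_basis_vector)
  ultimately have "\<psi> \<in> {mmul Enc V \<phi> | \<phi>. isop Enc {} \<phi>}"
    by (simp add: code_space[symmetric])
  then have "mmul Phys Proj \<psi> = \<psi>"
    by (auto simp: mmul_assoc[symmetric] Proj_V)
  then show "mmul Enc (mmul Phys Proj (mmul Phys A V)) (basis_vector Enc y) =
      mmul Enc (mmul Phys A V) (basis_vector Enc y)"
    by (simp add: \<psi>_def mmul_assoc)
qed simp

text \<open>Commuting with the stabilizers gives \<open>Proj A Proj = A Proj\<close>; hermiticity turns this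
  into \<open>Proj A Proj = Proj A\<close>.\<close>

lemma CSP_if_commutes_with_stabilizers:
  assumes A: "isop Phys Phys A" "adj A = A" and comm: "\<forall>g\<in>G. mmul Phys A g = mmul Phys g A"
  shows "CSP n nL V A"
proof -
  have AP: "mmul Phys A Proj = mmul Phys Proj (mmul Phys A Proj)"
    using Proj_mmul_V_if_commutes[OF A(1) comm] by (simp add: Proj_eq mmul_assoc[symmetric])
  have "mmul Phys Proj A = adj (mmul Phys A Proj)"
    by (simp add: adj_mmul adj_Proj A(2))
  also have "\<dots> = mmul Phys Proj (mmul Phys A Proj)"
    by (subst AP) (simp add: adj_mmul adj_Proj A(2) mmul_assoc)
  finally show ?thesis
    using AP by (simp add: CSP_def)
qed

lemma pauli_string_CSP_if_logical_action_nonzero: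
  assumes "logical_action n V (prodop Phys (\<lambda>q. sigma (k q))) \<noteq> (\<lambda>x y. 0)"
  shows "CSP n nL V (prodop Phys (\<lambda>q. sigma (k q)))"
proof (rule CSP_if_commutes_with_stabilizers)
  show "adj (prodop Phys (\<lambda>q. sigma (k q))) = prodop Phys (\<lambda>q. sigma (k q))"
    by (simp add: adj_prodop)
  show "\<forall>g\<in>G. mmul Phys (prodop Phys (\<lambda>q. sigma (k q))) g = mmul Phys g (prodop Phys (\<lambda>q. sigma (k q)))"
  proof
    fix g assume g: "g \<in> G"
    obtain c m where gm: "g = scal c (prodop Phys (\<lambda>q. sigma (m q)))"
      using stabilizer_pauli[OF g] by (auto elim!: pauli_opsE)
    obtain e where "e = 1 \<or> e = -1" and "mmul Phys (prodop Phys (\<lambda>q. sigma (k q))) (prodop Phys (\<lambda>q. sigma (m q))) =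
        scal e (mmul Phys (prodop Phys (\<lambda>q. sigma (m q))) (prodop Phys (\<lambda>q. sigma (k q))))"
      using pauli_commute_or_anticommute[of Phys k m] by auto
    then have e: "mmul Phys (prodop Phys (\<lambda>q. sigma (k q))) g =
        scal e (mmul Phys g (prodop Phys (\<lambda>q. sigma (k q))))"
      by (simp add: gm mmul_scal_left mmul_scal_right scal_scal mult.commute)
    moreover have "e \<noteq> -1"
      using logical_action_zero_if_anticommutes[OF g] e assms by auto
    ultimately show "mmul Phys (prodop Phys (\<lambda>q. sigma (k q))) g = mmul Phys g (prodop Phys (\<lambda>q. sigma (k q)))"
      using \<open>e = 1 \<or> e = -1\<close> by auto
  qed
qed simp

lemma pauli_ops_tens_S: "P \<in> pauli_ops S \<Longrightarrow> tens S Junk P (ident Junk) \<in> pauli_ops Enc"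
  using pauli_ops_tens_ident[OF finite_S _ S_Junk_disjoint, of P] by simp

text \<open>Expanding a bare implementation of \<open>P \<otimes> Id\<close> supported off \<open>C\<close> in Pauli strings,
  some term must overlap with \<open>P \<otimes> Id\<close>.\<close>

lemma correctable_pauli_xz_overlap:
  assumes C: "C \<subseteq> Phys" "correctable n nL V S C" and P: "P \<in> pauli_ops S"
  shows "\<exists>a\<in>cfgs (Phys - C). \<exists>b\<in>cfgs (Phys - C).
    trace Enc (mmul Enc (adj (tens S Junk P (ident Junk))) (logical_action n V (pauli_xz Phys a b))) \<noteq> 0"
proof -
  define PL where "PL = tens S Junk P (ident Junk)"
  obtain A where A: "isop (Phys - C) (Phys - C) A"
    and la: "logical_action n V (tens (Phys - C) C A (ident C)) = PL"
    using C(2) isop_pauli[OF P] unfolding correctable_def Let_def PL_def by blast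
  define I where "I = cfgs (Phys - C) \<times> cfgs (Phys - C)"
  define f where "f p = pauli_coeff (Phys - C) A p *
    trace Enc (mmul Enc (adj PL) (logical_action n V (pauli_xz Phys (fst p) (snd p))))" for p
  have fin_C: "finite C"
    using C(1) finite_subset by blast
  have Phys_split: "(Phys - C) \<union> C = Phys" "(Phys - C) \<inter> C = {}"
    using C(1) by auto
  have "tens (Phys - C) C A (ident C) =
      lincomb I (pauli_coeff (Phys - C) A) (\<lambda>p. tens (Phys - C) C (pauli_xz (Phys - C) (fst p) (snd p)) (ident C))"
    by (subst pauli_expansion[OF _ A]) (simp_all add: I_def tens_lincomb_left)
  also have "\<dots> = lincomb I (pauli_coeff (Phys - C) A) (\<lambda>p. pauli_xz Phys (fst p) (snd p))"
    using pauli_xz_Un[OF _ fin_C Phys_split(2)] unfolding Phys_split(1)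
    by (intro lincomb_cong) (auto simp: I_def)
  finally have "trace Enc (mmul Enc (adj PL) PL) = (\<Sum>p\<in>I. f p)"
    by (simp add: la[symmetric] f_def logical_action_lincomb mmul_lincomb_right trace_lincomb)
  moreover have "trace Enc (mmul Enc (adj PL) PL) \<noteq> 0"
    using pauli_unitary(1)[OF _ pauli_ops_tens_S[OF P]] trace_ident_nonzero by (simp add: PL_def)
  ultimately obtain p where "p \<in> I" "f p \<noteq> 0"
    by (metis sum.neutral)
  then show ?thesis
    unfolding I_def f_def PL_def by (cases p) auto
qed

lemma correctable_cleaning:
  assumes C: "C \<subseteq> Phys" "correctable n nL V S C" and P: "P \<in> pauli_ops S"
  shows "\<exists>k a. (\<forall>q\<in>C. k q = 0) \<and> a \<noteq> 0 \<and> CSP n nL V (prodop Phys (\<lambda>q. sigma (k q))) \<and>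
    logical_action n V (prodop Phys (\<lambda>q. sigma (k q))) = tens S Junk (scal a P) (ident Junk)"
proof -
  obtain a b where ab: "a \<in> cfgs (Phys - C)" "b \<in> cfgs (Phys - C)"
    and tr: "trace Enc (mmul Enc (adj (tens S Junk P (ident Junk))) (logical_action n V (pauli_xz Phys a b))) \<noteq> 0"
    using correctable_pauli_xz_overlap[OF C P] by blast
  define k where "k q = pauli_idx (a q) (b q)" for q
  have s: "pauli_xz Phys a b = prodop Phys (\<lambda>q. sigma (k q))"
    by (simp add: pauli_xz_def k_def)
  have "logical_action n V (pauli_xz Phys a b) \<noteq> (\<lambda>x y. 0)"
    using tr by (auto simp: trace_def mmul_def)
  then have CSP: "CSP n nL V (prodop Phys (\<lambda>q. sigma (k q)))"
    unfolding s by (rule pauli_string_CSP_if_logical_action_nonzero)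
  then have "logical_action n V (pauli_xz Phys a b) \<in> pauli_ops Enc"
    using logical_action_pauli pauli_xz_in_pauli_ops s by metis
  then obtain c where "c \<noteq> 0" "logical_action n V (pauli_xz Phys a b) = scal c (tens S Junk P (ident Junk))"
    using pauli_trace_nonzero_imp_multiple[OF _ pauli_ops_tens_S[OF P] _ tr] by auto
  moreover have "\<forall>q\<in>C. k q = 0"
    using ab by (auto simp: k_def cfgs_def)
  ultimately show ?thesis
    using CSP s by (auto simp: tens_scal_left)
qed

lemma logical_action_ident: "logical_action n V (ident Phys) = ident Enc"
  by (simp add: logical_action_def mmul_ident_left[OF _ isop_V] V_isometry)

lemma dressed_unitary_factors:
  assumes U: "CSP n nL V U" "mmul Phys (adj U) U = ident Phys" "mmul Phys U (adj U) = ident Phys"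
    and W: "isop S S W" "isop Junk Junk Z" "logical_action n V U = tens S Junk W Z"
  shows "\<exists>\<mu>. \<mu> \<noteq> 0 \<and> mmul S (adj W) W = scal \<mu> (ident S)"
    and "\<exists>\<mu>. \<mu> \<noteq> 0 \<and> mmul S W (adj W) = scal \<mu> (ident S) \<and>
      mmul Junk Z (adj Z) = scal (1 / \<mu>) (ident Junk)"
proof -
  have la_adj: "logical_action n V (adj U) = tens S Junk (adj W) (adj Z)"
    by (simp add: logical_action_adj W(3) tens_adj)
  have "tens S Junk (mmul S (adj W) W) (mmul Junk (adj Z) Z) = logical_action n V (mmul Phys (adj U) U)"
    by (simp add: logical_action_mmul CSP_adj U(1) la_adj W(3) tens_S_mmul)
  then have "tens S Junk (mmul S (adj W) W) (mmul Junk (adj Z) Z) = ident (S \<union> Junk)"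
    by (simp add: U(2) logical_action_ident)
  then show "\<exists>\<mu>. \<mu> \<noteq> 0 \<and> mmul S (adj W) W = scal \<mu> (ident S)"
    using tens_eq_ident_scalar[OF finite_S finite_Junk S_Junk_disjoint
        isop_mmul[OF isop_adj[OF W(1)] W(1)] isop_mmul[OF isop_adj[OF W(2)] W(2)]] by blast
  have "tens S Junk (mmul S W (adj W)) (mmul Junk Z (adj Z)) = logical_action n V (mmul Phys U (adj U))"
    by (simp add: logical_action_mmul CSP_adj U(1) la_adj W(3) tens_S_mmul)
  then have "tens S Junk (mmul S W (adj W)) (mmul Junk Z (adj Z)) = ident (S \<union> Junk)"
    by (simp add: U(3) logical_action_ident)
  then show "\<exists>\<mu>. \<mu> \<noteq> 0 \<and> mmul S W (adj W) = scal \<mu> (ident S) \<and>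
      mmul Junk Z (adj Z) = scal (1 / \<mu>) (ident Junk)"
    using tens_eq_ident_scalar[OF finite_S finite_Junk S_Junk_disjoint
        isop_mmul[OF W(1) isop_adj[OF W(1)]] isop_mmul[OF W(2) isop_adj[OF W(2)]]] by blast
qed

text \<open>Off \<open>R\<close> the product operator is the identity and the bare implementation lives there,
  while on \<open>R\<close> the roles are swapped; so the two commute, and \<open>V\<close> transports this to the logical level.\<close>

lemma correctable_support_commutes:
  assumes R: "R \<subseteq> Phys" "correctable n nL V S R"
    and f: "\<And>q. q \<in> Phys - R \<Longrightarrow> f q = ident1"
    and KV: "mmul Phys (prodop Phys f) V = mmul Enc V X" and X: "isop Enc Enc X"
    and A: "isop S S A"
  shows "mmul Enc X (tens S Junk A (ident Junk)) = mmul Enc (tens S Junk A (ident Junk)) X"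
proof -
  define AL where "AL = tens S Junk A (ident Junk)"
  have AL: "isop Enc Enc AL"
    using isop_tens[of S Junk A "ident Junk"] by (simp add: AL_def)
  obtain A' where A': "isop (Phys - R) (Phys - R) A'"
    and B: "CSP n nL V (tens (Phys - R) R A' (ident R))"
    and laB: "logical_action n V (tens (Phys - R) R A' (ident R)) = AL"
    using R(2) A unfolding correctable_def Let_def AL_def by blast
  define B where "B = tens (Phys - R) R A' (ident R)"
  have fin: "finite R" "finite (Phys - R)"
    using R(1) finite_subset by auto
  have split: "(Phys - R) \<union> R = Phys" "(Phys - R) \<inter> R = {}"
    using R(1) by auto
  have BV: "mmul Phys B V = mmul Enc V AL"
    using CSP_mmul_V[OF B] laB by (simp add: B_def)
  have "prodop ((Phys - R) \<union> R) f = tens (Phys - R) R (prodop (Phys - R) f) (prodop R f)"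
    by (rule prodop_Un[OF fin(2,1) split(2)])
  moreover have "prodop (Phys - R) f = ident (Phys - R)"
    using f by (intro prodop_eq_ident[OF fin(2)]) auto
  ultimately have K: "prodop Phys f = tens (Phys - R) R (ident (Phys - R)) (prodop R f)"
    using split(1) by simp
  have KB: "mmul Phys (prodop Phys f) B = mmul Phys B (prodop Phys f)"
    using tens_mmul[OF fin(2,1) split(2)] unfolding split(1) K B_def
    by (simp add: mmul_ident_left[OF fin(2) A'] mmul_ident_right[OF fin(2) A']
        mmul_ident_left[OF fin(1) isop_prodop] mmul_ident_right[OF fin(1) isop_prodop])
  have "mmul Enc V (mmul Enc X AL) = mmul Phys (prodop Phys f) (mmul Phys B V)"
    by (simp add: mmul_assoc[symmetric] KV BV)
  also have "\<dots> = mmul Phys B (mmul Phys (prodop Phys f) V)"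
    by (simp add: mmul_assoc[symmetric] KB)
  also have "\<dots> = mmul Enc V (mmul Enc AL X)"
    by (simp add: KV mmul_assoc[symmetric] BV)
  finally have "mmul Enc X AL = mmul Enc AL X"
    by (rule V_cancel[OF isop_mmul[OF X AL] isop_mmul[OF AL X]])
  then show ?thesis
    by (simp add: AL_def)
qed

lemma correctable_support_logical_scalar:
  assumes R: "R \<subseteq> Phys" "correctable n nL V S R"
    and f: "\<And>q. q \<in> Phys - R \<Longrightarrow> f q = ident1" and K: "CSP n nL V (prodop Phys f)"
    and la: "logical_action n V (prodop Phys f) = tens S Junk X (scal c (ident Junk))" and "c \<noteq> 0"
    and X: "isop S S X"
  shows "\<exists>a. X = scal a (ident S)"
proof (rule commutes_with_all_scalar[OF finite_S X])
  fix A assume A: "isop S S A"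
  have KV: "mmul Phys (prodop Phys f) V = mmul Enc V (tens S Junk X (scal c (ident Junk)))"
    using CSP_mmul_V[OF K] la by simp
  have "isop Enc Enc (tens S Junk X (scal c (ident Junk)))"
    using isop_tens[of S Junk X] by simp
  then have "mmul Enc (tens S Junk X (scal c (ident Junk))) (tens S Junk A (ident Junk)) =
      mmul Enc (tens S Junk A (ident Junk)) (tens S Junk X (scal c (ident Junk)))"
    using correctable_support_commutes[OF R f KV _ A] by blast
  then have "scal c (tens S Junk (mmul S X A) (ident Junk)) = scal c (tens S Junk (mmul S A X) (ident Junk))"
    by (simp add: tens_S_mmul tens_scal_right mmul_scal_left mmul_scal_right
        mmul_ident_left[OF finite_Junk isop_ident])
  then have "tens S Junk (mmul S X A) (ident Junk) = tens S Junk (mmul S A X) (ident Junk)"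
    by (rule scal_cancel[OF \<open>c \<noteq> 0\<close>])
  then show "mmul S X A = mmul S A X"
    by (rule tens_ident_right_inj[OF S_Junk_disjoint isop_mmul[OF X A] isop_mmul[OF A X]])
qed

text \<open>Clean \<open>P\<close> off \<open>R0\<close> and \<open>Q\<close> off \<open>R1\<close>; by transversality the nested
  group commutator of \<open>U\<close> with the two cleaned Pauli strings acts trivially off \<open>R2\<close>, so its
  logical part is a scalar.\<close>

lemma transversal_commutator_commutator_scalar:
  assumes u: "\<And>q. q \<in> Phys \<Longrightarrow> unitary1 (u q)" and U: "CSP n nL V (prodop Phys u)"
    and W: "isop S S W" "isop Junk Junk Z" "logical_action n V (prodop Phys u) = tens S Junk W Z"
    and R0: "R0 \<subseteq> Phys" "correctable n nL V S R0"
    and R1: "R1 \<subseteq> Phys" "correctable n nL V S R1"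
    and R2: "R2 \<subseteq> Phys" "correctable n nL V S R2"
    and cover: "Phys - R2 \<subseteq> R0 \<union> R1"
    and P: "P \<in> pauli_ops S" and Q: "Q \<in> pauli_ops S"
  shows "\<exists>c. commutator S (commutator S W P) Q = scal c (ident S)"
proof -
  have unitary: "mmul Phys (adj (prodop Phys u)) (prodop Phys u) = ident Phys"
    "mmul Phys (prodop Phys u) (adj (prodop Phys u)) = ident Phys"
    using prodop_unitary[of Phys u] u by auto
  obtain \<mu> where \<mu>: "\<mu> \<noteq> 0" "mmul Junk Z (adj Z) = scal (1 / \<mu>) (ident Junk)"
    using dressed_unitary_factors(2)[OF U unitary W] by auto
  obtain kP a where kP: "\<forall>q\<in>R0. kP q = 0" "a \<noteq> 0" "CSP n nL V (prodop Phys (\<lambda>q. sigma (kP q)))"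
    "logical_action n V (prodop Phys (\<lambda>q. sigma (kP q))) = tens S Junk (scal a P) (ident Junk)"
    using correctable_cleaning[OF R0 P] by blast
  obtain kQ b where kQ: "\<forall>q\<in>R1. kQ q = 0" "b \<noteq> 0" "CSP n nL V (prodop Phys (\<lambda>q. sigma (kQ q)))"
    "logical_action n V (prodop Phys (\<lambda>q. sigma (kQ q))) = tens S Junk (scal b Q) (ident Junk)"
    using correctable_cleaning[OF R1 Q] by blast
  define f where "f q = commutator1 (commutator1 (u q) (sigma (kP q))) (sigma (kQ q))" for q
  have K: "commutator Phys (commutator Phys (prodop Phys u) (prodop Phys (\<lambda>q. sigma (kP q))))
      (prodop Phys (\<lambda>q. sigma (kQ q))) = prodop Phys f"
    by (simp add: f_def[abs_def] commutator_prodop)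
  have f_trivial: "f q = ident1" if "q \<in> Phys - R2" for q
    using that cover u kP(1) kQ(1) unfolding f_def
    by (intro commutator1_commutator1_ident1) (auto simp: sigma_0)
  define X where "X = commutator S (commutator S W (scal a P)) (scal b Q)"
  have la_f: "logical_action n V (prodop Phys f) = tens S Junk X (scal (1 / \<mu> * cnj (1 / \<mu>)) (ident Junk))"
    unfolding K[symmetric]
    by (simp add: logical_action_commutator CSP_commutator U kP(3,4) kQ(3,4) W(3) commutator_tens_S X_def
        commutator_commutator_ident_scalar[OF finite_Junk W(2) \<mu>(2)])
  have CSP_f: "CSP n nL V (prodop Phys f)"
    unfolding K[symmetric] by (intro CSP_commutator U kP(3) kQ(3))
  have "isop S S X"
    unfolding X_def by (intro isop_commutator isop_scal W(1) isop_pauli P Q)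
  moreover have "1 / \<mu> * cnj (1 / \<mu>) \<noteq> 0"
    using \<mu>(1) by simp
  ultimately obtain c where c: "X = scal c (ident S)"
    using correctable_support_logical_scalar[OF R2 f_trivial CSP_f la_f] by blast
  define k where "k = b * cnj b * (a * cnj a * cnj (a * cnj a))"
  have "k \<noteq> 0"
    using kP(2) kQ(2) by (simp add: k_def)
  have "scal k (commutator S (commutator S W P) Q) = X"
    by (simp add: X_def k_def commutator_scal_left commutator_scal_right scal_scal)
  also have "\<dots> = scal k (scal (c / k) (ident S))"
    using \<open>k \<noteq> 0\<close> by (simp add: c scal_scal)
  finally have "commutator S (commutator S W P) Q = scal (c / k) (ident S)"
    by (rule scal_cancel[OF \<open>k \<noteq> 0\<close>])
  then show ?thesis ..
qed

lemma correctable_empty: "correctable n nL V S {}"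
  unfolding correctable_def Let_def
proof (intro allI impI)
  fix AL assume AL: "isop S S AL"
  define Y where "Y = tens S Junk AL (ident Junk)"
  have Y: "isop Enc Enc Y"
    using isop_tens[of S Junk AL "ident Junk"] by (simp add: Y_def)
  define A where "A = mmul Enc V (mmul Enc Y (adj V))"
  have A: "isop Phys Phys A"
    unfolding A_def by (intro isop_mmul isop_V Y isop_adj)
  have tens_A: "tens (Phys - {}) {} A (ident {}) = A"
  proof (rule isop_eqI)
    show "isop Phys Phys (tens (Phys - {}) {} A (ident {}))"
      using isop_tens[of Phys "{}" A "ident {}"] by simp
    fix x y assume "x \<in> cfgs Phys" "y \<in> cfgs Phys"
    moreover have "rst {} x = zero_cfg" "rst {} y = zero_cfg"
      by (auto simp: rst_def zero_cfg_def)
    ultimately show "tens (Phys - {}) {} A (ident {}) x y = A x y"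
      by (simp add: tens_apply ident_apply)
  qed (rule A)
  have VZ: "mmul Phys (adj V) (mmul Enc V Z) = Z" if "isop Enc T Z" for Z T
    by (simp add: mmul_assoc[symmetric] V_isometry mmul_ident_left[OF _ that])
  have "CSP n nL V A"
    unfolding CSP_def A_def Proj_eq
    by (simp add: mmul_assoc VZ[OF isop_adj[OF isop_V]] VZ[OF isop_mmul[OF Y isop_adj[OF isop_V]]])
  moreover have "logical_action n V A = Y"
    unfolding logical_action_def A_def
    by (simp add: mmul_assoc VZ[OF isop_mmul[OF Y isop_adj[OF isop_V]]])
      (simp add: mmul_assoc[symmetric] V_isometry mmul_ident_right[OF _ Y] mmul_ident_left[OF _ Y])
  ultimately show "\<exists>A. isop (Phys - {}) (Phys - {}) A \<and> CSP n nL V (tens (Phys - {}) {} A (ident {})) \<and>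
      logical_action n V (tens (Phys - {}) {} A (ident {})) = tens S Junk AL (ident Junk)"
    using A tens_A by (intro exI[of _ A]) (simp add: Y_def)
qed

lemma correctable_if_card_less_distance:
  assumes "T \<subseteq> Phys" "card T < code_distance n nL V S"
  shows "correctable n nL V S T"
proof (rule ccontr)
  assume "\<not> correctable n nL V S T"
  then have "code_distance n nL V S \<le> card T"
    using assms(1) unfolding code_distance_def by (intro cInf_lower) auto
  then show False
    using assms(2) by simp
qed

lemma code_price_attained:
  "\<exists>R. R \<subseteq> Phys \<and> card R = code_price n nL V S \<and> correctable n nL V S (Phys - R)"
proof -
  have "correctable n nL V S (Phys - Phys)"
    using correctable_empty by simp
  then have "{card R | R. R \<subseteq> Phys \<and> correctable n nL V S (Phys - R)} \<noteq> {}"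
    by blast
  then have "code_price n nL V S \<in> {card R | R. R \<subseteq> Phys \<and> correctable n nL V S (Phys - R)}"
    unfolding code_price_def by (rule Inf_nat_def1)
  then show ?thesis
    by auto
qed

lemma correctable_cover:
  assumes "2 \<le> code_price n nL V S"
    and "int (code_price n nL V S) \<le> 2 * int (code_distance n nL V S) - 2"
  shows "\<exists>R0 R1 R2. R0 \<subseteq> Phys \<and> correctable n nL V S R0 \<and> R1 \<subseteq> Phys \<and> correctable n nL V S R1 \<and>
     R2 \<subseteq> Phys \<and> correctable n nL V S R2 \<and> Phys - R2 \<subseteq> R0 \<union> R1"
proof -
  define p where "p = code_price n nL V S"
  define d where "d = code_distance n nL V S"
  have pd: "int p \<le> 2 * int d - 2"
    using assms(2) by (simp add: p_def d_def)
  obtain R where R: "R \<subseteq> Phys" "card R = p" "correctable n nL V S (Phys - R)"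
    using code_price_attained by (auto simp: p_def)
  obtain R1 where R1: "R1 \<subseteq> R" "card R1 = p div 2" "finite R1"
    using obtain_subset_with_card_n[of "p div 2" R] R(2) by auto
  have "card (R - R1) = p - p div 2"
    using card_Diff_subset[OF R1(3) R1(1)] R1(2) R(2) by simp
  moreover have "p div 2 < d" "p - p div 2 < d"
    using pd by linarith+
  ultimately have "correctable n nL V S R1" "correctable n nL V S (R - R1)"
    using R(1) R1(1,2) by (auto simp: d_def intro!: correctable_if_card_less_distance)
  moreover have "Phys - R \<subseteq> Phys" "R1 \<subseteq> Phys" "R - R1 \<subseteq> Phys" "Phys - (R - R1) \<subseteq> (Phys - R) \<union> R1"
    using R(1) R1(1) by auto
  ultimately show ?thesis
    using R(3) by (intro exI conjI) assumption+
qed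

end

theorem lemma9:
  fixes n nL :: nat and G :: "qop set" and V U :: qop and S :: "nat set"
  assumes "stabilizer_code n nL G V"
    and "S \<subseteq> {..<nL}"
    and "2 \<le> code_price n nL V S"
    and "int (code_price n nL V S) \<le> 2 * int (code_distance n nL V S) - 2"
    and "transversal n U"
    and "dressed_CSP n nL V S U"
  shows "\<exists>UL UJ. isop S S UL \<and> isop ({..<nL} - S) ({..<nL} - S) UJ \<and>
           logical_action n V U = tens S ({..<nL} - S) UL UJ \<and> UL \<in> cliff S 2"
proof -
  interpret logical_subsystem n nL G V S
    using assms(1,2) by unfold_locales
  obtain UL UJ where U: "CSP n nL V U" and UL: "isop S S UL" and UJ: "isop Junk Junk UJ"
    and la: "logical_action n V U = tens S Junk UL UJ"
    using assms(6) unfolding dressed_CSP_def by blast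
  obtain u where u: "\<And>q. q \<in> Phys \<Longrightarrow> unitary1 (u q)" and Uu: "U = prodop Phys u"
    using assms(5) unfolding transversal_def prodop_def by auto
  obtain R0 R1 R2 where R: "R0 \<subseteq> Phys" "correctable n nL V S R0" "R1 \<subseteq> Phys" "correctable n nL V S R1"
    "R2 \<subseteq> Phys" "correctable n nL V S R2" "Phys - R2 \<subseteq> R0 \<union> R1"
    using correctable_cover[OF assms(3,4)] by blast
  have unitary: "mmul Phys (adj U) U = ident Phys" "mmul Phys U (adj U) = ident Phys"
    using prodop_unitary[of Phys u] u by (simp_all add: Uu)
  obtain \<mu> where \<mu>: "\<mu> \<noteq> 0" "mmul S (adj UL) UL = scal \<mu> (ident S)"
    using dressed_unitary_factors(1)[OF U unitary UL UJ la] by auto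
  obtain \<mu>' where \<mu>': "\<mu>' \<noteq> 0" "mmul S UL (adj UL) = scal \<mu>' (ident S)"
    using dressed_unitary_factors(2)[OF U unitary UL UJ la] by auto
  have "UL \<in> cliff S 2"
    using cliff_2_if_commutators_scalar[OF finite_S UL \<mu>(2) \<mu>'(2) \<mu>(1) \<mu>'(1)]
      transversal_commutator_commutator_scalar[OF u U[unfolded Uu] UL UJ la[unfolded Uu] R] by blast
  then show ?thesis
    using UL UJ la by blast
qed

end
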